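(* Let $H_0,H_1$ be complex Hilbert spaces, $G$ a densely defined closed operator from $H_0$ into $H_1$ and $D$ a densely defined closed operator from $H_1$ into $H_0$ with $-G^*\subset D$. Let $m\in\mathcal L(H_0)$ (not necessarily coercive), $a\in\mathcal L(H_1)$ coercive, $H$ a Hilbert space and $\kappa\in\mathcal L(\mathrm{BD}(G),H)$ injective with dense range. Define $j=\kappa\circ\pi_{\mathrm{BD}(G)}\colon\mathrm{dom}(G)\to H$ and $\mathfrak b(u,v)=(aGu,Gv)_{H_1}+(mu,v)_{H_0}$ for $u,v\in\mathrm{dom}(G)$. Then the Dirichlet-to-Neumann graph $\Lambda_H$ in $H$ associated with $-DaG+m$ satisfies \[ \Lambda_H=\{(\varphi,\psi)\in H\times H:\exists u\in\mathrm{dom}(G)\text{ with }j(u)=\varphi\text{ and }\mathfrak b(u,v)=(\psi,j(v))_H\text{ for all }v\in\mathrm{dom}(G)\}. \]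
   Context: $\mathring D=-G^*$, $\mathring G=-D^*$. Domains carry graph inner products. $\mathrm{BD}(G)$ (resp. $\mathrm{BD}(D)$) is the orthogonal complement of $\mathrm{dom}(\mathring G)$ in $\mathrm{dom}(G)$ (resp. of $\mathrm{dom}(\mathring D)$ in $\mathrm{dom}(D)$) with induced inner products; $\pi_{\mathrm{BD}(G)},\pi_{\mathrm{BD}(D)}$ the orthogonal projections. $G$ maps $\mathrm{BD}(G)$ into $\mathrm{BD}(D)$. Coercive: $\mathrm{Re}(ax,x)\ge\mu\|x\|^2$ for some $\mu>0$. The Dirichlet-to-Neumann graph is $\Lambda=\{(\pi_{\mathrm{BD}(G)}u,\pi_{\mathrm{BD}(D)}aGu): u\in\mathrm{dom}(G),\ aGu\in\mathrm{dom}(D),\ mu-DaGu=0\}$, and $\Lambda_H=\{(\varphi,\psi)\in H\times H:\exists u_0\in\mathrm{BD}(G),\ \kappa(u_0)=\varphi,\ (u_0,G\kappa^*\psi)\in\Lambda\}$ with $\kappa^*\colon H\to\mathrm{BD}(G)$ the adjoint of $\kappa$. *)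

theory Defs
  imports "HOL-Analysis.Analysis"
begin

text \<open>Complex Hilbert spaces are given explicitly: the carrier is a whole type,
  together with a complex scalar multiplication sc and an inner product ip
  (linear in the first, conjugate-linear in the second argument).\<close>

definition inorm :: "('a \<Rightarrow> 'a \<Rightarrow> complex) \<Rightarrow> 'a \<Rightarrow> real" where
  "inorm ip x = sqrt (Re (ip x x))"

definition cHilbert :: "(complex \<Rightarrow> 'a::ab_group_add \<Rightarrow> 'a) \<Rightarrow> ('a \<Rightarrow> 'a \<Rightarrow> complex) \<Rightarrow> bool" where
  "cHilbert sc ip \<longleftrightarrow>
     Vector_Spaces.vector_space sc \<and>
     (\<forall>x y z. ip (x + y) z = ip x z + ip y z) \<and>
     (\<forall>c x y. ip (sc c x) y = c * ip x y) \<and>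
     (\<forall>x y. ip y x = cnj (ip x y)) \<and>
     (\<forall>x. x \<noteq> 0 \<longrightarrow> Re (ip x x) > 0) \<and>
     (\<forall>X::nat \<Rightarrow> 'a. (\<forall>e>0. \<exists>N. \<forall>m\<ge>N. \<forall>n\<ge>N. inorm ip (X m - X n) < e)
          \<longrightarrow> (\<exists>L. (\<lambda>n. inorm ip (X n - L)) \<longlonglongrightarrow> 0))"

definition dense_in :: "('a::ab_group_add \<Rightarrow> 'a \<Rightarrow> complex) \<Rightarrow> 'a set \<Rightarrow> bool" where
  "dense_in ip S \<longleftrightarrow> (\<forall>x. \<forall>e>0. \<exists>y\<in>S. inorm ip (x - y) < e)"

text \<open>(Unbounded) linear operators are represented by their graphs.\<close>
definition lin_op :: "(complex \<Rightarrow> 'a::ab_group_add \<Rightarrow> 'a) \<Rightarrow> (complex \<Rightarrow> 'b::ab_group_add \<Rightarrow> 'b)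
    \<Rightarrow> ('a \<times> 'b) set \<Rightarrow> bool" where
  "lin_op sc0 sc1 A \<longleftrightarrow>
     (0, 0) \<in> A \<and>
     (\<forall>x y x' y'. (x, y) \<in> A \<longrightarrow> (x', y') \<in> A \<longrightarrow> (x + x', y + y') \<in> A) \<and>
     (\<forall>c x y. (x, y) \<in> A \<longrightarrow> (sc0 c x, sc1 c y) \<in> A) \<and>
     (\<forall>y. (0, y) \<in> A \<longrightarrow> y = 0)"

definition closed_op :: "('a::ab_group_add \<Rightarrow> 'a \<Rightarrow> complex) \<Rightarrow> ('b::ab_group_add \<Rightarrow> 'b \<Rightarrow> complex)
    \<Rightarrow> ('a \<times> 'b) set \<Rightarrow> bool" where
  "closed_op ip0 ip1 A \<longleftrightarrow>
     (\<forall>X Y x y. (\<forall>n. (X n, Y n) \<in> A) \<longrightarrow> (\<lambda>n. inorm ip0 (X n - x)) \<longlonglongrightarrow> 0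
        \<longrightarrow> (\<lambda>n. inorm ip1 (Y n - y)) \<longlonglongrightarrow> 0 \<longrightarrow> (x, y) \<in> A)"

definition opap :: "('a \<times> 'b) set \<Rightarrow> 'a \<Rightarrow> 'b" where
  "opap A x = (THE y. (x, y) \<in> A)"

definition adjoint_op :: "('a \<Rightarrow> 'a \<Rightarrow> complex) \<Rightarrow> ('b \<Rightarrow> 'b \<Rightarrow> complex)
    \<Rightarrow> ('a \<times> 'b) set \<Rightarrow> ('b \<times> 'a) set" where
  "adjoint_op ip0 ip1 A = {(y, z). \<forall>(x, w)\<in>A. ip1 w y = ip0 x z}"

definition neg_op :: "('a \<times> 'b::uminus) set \<Rightarrow> ('a \<times> 'b) set" where
  "neg_op A = {(x, - y) | x y. (x, y) \<in> A}"

definition gip :: "('a \<Rightarrow> 'a \<Rightarrow> complex) \<Rightarrow> ('b \<Rightarrow> 'b \<Rightarrow> complex) \<Rightarrow> ('a \<times> 'b) set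
    \<Rightarrow> 'a \<Rightarrow> 'a \<Rightarrow> complex" where
  "gip ip0 ip1 A u v = ip0 u v + ip1 (opap A u) (opap A v)"

definition BD :: "('a \<Rightarrow> 'a \<Rightarrow> complex) \<Rightarrow> ('b \<Rightarrow> 'b \<Rightarrow> complex) \<Rightarrow> ('a \<times> 'b) set
    \<Rightarrow> ('a \<times> 'b) set \<Rightarrow> 'a set" where
  "BD ip0 ip1 A A0 = {u \<in> Domain A. \<forall>w\<in>Domain A0. gip ip0 ip1 A u w = 0}"

definition piBD :: "('a::ab_group_add \<Rightarrow> 'a \<Rightarrow> complex) \<Rightarrow> ('b \<Rightarrow> 'b \<Rightarrow> complex) \<Rightarrow> ('a \<times> 'b) set
    \<Rightarrow> ('a \<times> 'b) set \<Rightarrow> 'a \<Rightarrow> 'a" where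
  "piBD ip0 ip1 A A0 u = (THE w. w \<in> BD ip0 ip1 A A0 \<and>
      (\<forall>z\<in>BD ip0 ip1 A A0. gip ip0 ip1 A (u - w) z = 0))"

definition bounded_lin :: "(complex \<Rightarrow> 'a::ab_group_add \<Rightarrow> 'a) \<Rightarrow> ('a \<Rightarrow> 'a \<Rightarrow> complex)
    \<Rightarrow> (complex \<Rightarrow> 'b::ab_group_add \<Rightarrow> 'b) \<Rightarrow> ('b \<Rightarrow> 'b \<Rightarrow> complex) \<Rightarrow> ('a \<Rightarrow> 'b) \<Rightarrow> bool" where
  "bounded_lin sc0 ip0 sc1 ip1 f \<longleftrightarrow>
     (\<forall>x y. f (x + y) = f x + f y) \<and> (\<forall>c x. f (sc0 c x) = sc1 c (f x)) \<and>
     (\<exists>C. \<forall>x. inorm ip1 (f x) \<le> C * inorm ip0 x)"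

definition coercive :: "('b \<Rightarrow> 'b \<Rightarrow> complex) \<Rightarrow> ('b \<Rightarrow> 'b) \<Rightarrow> bool" where
  "coercive ip a \<longleftrightarrow> (\<exists>\<mu>>0. \<forall>x. Re (ip (a x) x) \<ge> \<mu> * (inorm ip x)\<^sup>2)"

definition kappa_adj :: "('a \<Rightarrow> 'a \<Rightarrow> complex) \<Rightarrow> ('b \<Rightarrow> 'b \<Rightarrow> complex) \<Rightarrow> ('a \<times> 'b) set
    \<Rightarrow> ('a \<times> 'b) set \<Rightarrow> ('c \<Rightarrow> 'c \<Rightarrow> complex) \<Rightarrow> ('a \<Rightarrow> 'c) \<Rightarrow> 'c \<Rightarrow> 'a" where
  "kappa_adj ip0 ip1 G G0 ipH \<kappa> \<psi> = (THE w. w \<in> BD ip0 ip1 G G0 \<and>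
      (\<forall>u\<in>BD ip0 ip1 G G0. ipH (\<kappa> u) \<psi> = gip ip0 ip1 G u w))"

text \<open>Dirichlet-to-Neumann graph Lambda in BD(G) x BD(D) for -DaG+m.
  Here G0 = dom of the "ring" operator -D^*, D0 = -G^*.\<close>
definition DtN :: "('a::ab_group_add \<Rightarrow> 'a \<Rightarrow> complex) \<Rightarrow> ('b::ab_group_add \<Rightarrow> 'b \<Rightarrow> complex)
    \<Rightarrow> ('a \<times> 'b) set \<Rightarrow> ('b \<times> 'a) set \<Rightarrow> ('a \<Rightarrow> 'a) \<Rightarrow> ('b \<Rightarrow> 'b) \<Rightarrow> ('a \<times> 'b) set" where
  "DtN ip0 ip1 G D m a =
     {(piBD ip0 ip1 G (neg_op (adjoint_op ip1 ip0 D)) u,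
       piBD ip1 ip0 D (neg_op (adjoint_op ip0 ip1 G)) (a (opap G u))) | u.
        u \<in> Domain G \<and> a (opap G u) \<in> Domain D \<and> m u - opap D (a (opap G u)) = 0}"

definition DtN_H :: "('a::ab_group_add \<Rightarrow> 'a \<Rightarrow> complex) \<Rightarrow> ('b::ab_group_add \<Rightarrow> 'b \<Rightarrow> complex)
    \<Rightarrow> ('a \<times> 'b) set \<Rightarrow> ('b \<times> 'a) set \<Rightarrow> ('a \<Rightarrow> 'a) \<Rightarrow> ('b \<Rightarrow> 'b)
    \<Rightarrow> ('c \<Rightarrow> 'c \<Rightarrow> complex) \<Rightarrow> ('a \<Rightarrow> 'c) \<Rightarrow> ('c \<times> 'c) set" where
  "DtN_H ip0 ip1 G D m a ipH \<kappa> =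
     {(\<phi>, \<psi>). \<exists>u0\<in>BD ip0 ip1 G (neg_op (adjoint_op ip1 ip0 D)).
        \<kappa> u0 = \<phi> \<and>
        (u0, opap G (kappa_adj ip0 ip1 G (neg_op (adjoint_op ip1 ip0 D)) ipH \<kappa> \<psi>))
          \<in> DtN ip0 ip1 G D m a}"

end

theory Submission
  imports Defs
begin

text \<open>
  The boundary data spaces BD(G) and BD(D) are the orthogonal complements of dom(G0) in dom(G) and
  of dom(D0) in dom(D) for the graph inner products, and G and D restrict to mutually inverse maps
  between them. Splitting q in dom(D) and v in dom(G) along these decompositions gives a generalised
  Green formula (q, Gv) + (Dq, v) = (D pi q, pi v) in BD(G), since the parts in dom(D0) and dom(G0)
  pair to zero by the definition of the adjoints. For q = aGu, testing the weak form against
  v in dom(G0) shows that (q, mu) lies in D** = D, i.e. DaGu = mu; testing it against BD(G), where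
  the functional v |-> (psi, kappa v) is represented by kappa* psi (Riesz), identifies the boundary
  component of aGu with G kappa* psi. These are exactly the conditions defining the DtN graph.
\<close>

lemma LIMSEQ_zero_squeeze:
  fixes f g :: "nat \<Rightarrow> real"
  assumes "\<And>n. 0 \<le> f n" "\<And>n. f n \<le> g n" "g \<longlonglongrightarrow> 0"
  shows "f \<longlonglongrightarrow> 0"
  by (rule tendsto_sandwich[OF _ _ tendsto_const assms(3)]) (use assms in \<open>auto intro: always_eventually\<close>)

lemma Cauchy_of_sq_dist_bound:
  fixes f :: "nat \<Rightarrow> nat \<Rightarrow> real"
  assumes "\<And>m n. (f m n)\<^sup>2 \<le> 2 * inverse (real (Suc m)) + 2 * inverse (real (Suc n))"
  shows "\<forall>e>0. \<exists>N. \<forall>m\<ge>N. \<forall>n\<ge>N. f m n < e"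
proof (intro allI impI)
  fix e :: real assume e: "e > 0"
  obtain N :: nat where N: "4 / e\<^sup>2 < real N" using reals_Archimedean2 by blast
  have small: "inverse (real (Suc k)) < e\<^sup>2 / 4" if "k \<ge> N" for k
  proof -
    have "inverse (real (Suc k)) < inverse (4 / e\<^sup>2)"
      using N that e by (intro less_imp_inverse_less) auto
    then show ?thesis by simp
  qed
  show "\<exists>N. \<forall>m\<ge>N. \<forall>n\<ge>N. f m n < e"
  proof (intro exI allI impI)
    fix m n assume "m \<ge> N" "n \<ge> N"
    then have "(f m n)\<^sup>2 < e\<^sup>2" using assms[of m n] small[of m] small[of n] by linarith
    then show "f m n < e" by (rule power2_less_imp_less) (use e in simp)
  qed
qed

lemma Cauchy_if_dominated:
  assumes "\<forall>e>0. \<exists>N. \<forall>m\<ge>N. \<forall>n\<ge>N. g (X m - X n) < (e::real)" and "\<And>x. f x \<le> g x"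
  shows "\<forall>e>0. \<exists>N. \<forall>m\<ge>N. \<forall>n\<ge>N. f (X m - X n) < e"
  using assms by (meson order_le_less_trans)

section \<open>Complex inner product spaces\<close>

locale inner_space_on = Vector_Spaces.vector_space sc
  for sc :: "complex \<Rightarrow> 'a::ab_group_add \<Rightarrow> 'a" +
  fixes V :: "'a set" and ip :: "'a \<Rightarrow> 'a \<Rightarrow> complex"
  assumes V_zero: "0 \<in> V" and V_add: "x \<in> V \<Longrightarrow> y \<in> V \<Longrightarrow> x + y \<in> V"
    and V_scale: "x \<in> V \<Longrightarrow> sc c x \<in> V"
    and ip_add_left: "x \<in> V \<Longrightarrow> y \<in> V \<Longrightarrow> z \<in> V \<Longrightarrow> ip (x + y) z = ip x z + ip y z"
    and ip_scale_left: "x \<in> V \<Longrightarrow> y \<in> V \<Longrightarrow> ip (sc c x) y = c * ip x y"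
    and ip_conj_sym: "x \<in> V \<Longrightarrow> y \<in> V \<Longrightarrow> ip y x = cnj (ip x y)"
    and ip_self_pos: "x \<in> V \<Longrightarrow> x \<noteq> 0 \<Longrightarrow> Re (ip x x) > 0"
begin

abbreviation nrm where "nrm x \<equiv> inorm ip x"

definition complete_subspace :: "'a set \<Rightarrow> bool" where
  "complete_subspace S \<longleftrightarrow> S \<subseteq> V \<and> 0 \<in> S \<and> (\<forall>x\<in>S. \<forall>y\<in>S. x + y \<in> S) \<and> (\<forall>c. \<forall>x\<in>S. sc c x \<in> S) \<and>
     (\<forall>X. (\<forall>n. X n \<in> S) \<longrightarrow> (\<forall>e>0. \<exists>N. \<forall>m\<ge>N. \<forall>n\<ge>N. nrm (X m - X n) < e)
        \<longrightarrow> (\<exists>L\<in>S. (\<lambda>n. nrm (X n - L)) \<longlonglongrightarrow> 0))"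

lemma complete_subspaceD:
  assumes "complete_subspace S"
  shows "S \<subseteq> V" and "0 \<in> S" and "\<And>x y. x \<in> S \<Longrightarrow> y \<in> S \<Longrightarrow> x + y \<in> S"
    and "\<And>c x. x \<in> S \<Longrightarrow> sc c x \<in> S"
    and "\<And>X. (\<forall>n. X n \<in> S) \<Longrightarrow> (\<forall>e>0. \<exists>N. \<forall>m\<ge>N. \<forall>n\<ge>N. nrm (X m - X n) < e)
      \<Longrightarrow> \<exists>L\<in>S. (\<lambda>n. nrm (X n - L)) \<longlonglongrightarrow> 0"
  using assms unfolding complete_subspace_def by blast+

lemma V_minus: "x \<in> V \<Longrightarrow> - x \<in> V"
  using V_scale[of x "-1"] by simp

lemma V_diff: "x \<in> V \<Longrightarrow> y \<in> V \<Longrightarrow> x - y \<in> V"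
  using V_add V_minus by (metis diff_conv_add_uminus)

lemma ip_zero_left: "y \<in> V \<Longrightarrow> ip 0 y = 0"
  using ip_scale_left[of 0 y 0] V_zero by simp

lemma ip_zero_right: "y \<in> V \<Longrightarrow> ip y 0 = 0"
  using ip_conj_sym[of 0 y] ip_zero_left V_zero by simp

lemma ip_minus_left: "x \<in> V \<Longrightarrow> y \<in> V \<Longrightarrow> ip (- x) y = - ip x y"
  using ip_scale_left[of x y "-1"] by simp

lemma ip_diff_left: "x \<in> V \<Longrightarrow> y \<in> V \<Longrightarrow> z \<in> V \<Longrightarrow> ip (x - y) z = ip x z - ip y z"
  using ip_add_left[of x "- y" z] ip_minus_left[of y z] V_minus[of y] by simp

lemma ip_add_right: "x \<in> V \<Longrightarrow> y \<in> V \<Longrightarrow> z \<in> V \<Longrightarrow> ip z (x + y) = ip z x + ip z y"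
  using ip_conj_sym[of "x + y" z] ip_add_left[of x y z] ip_conj_sym[of x z] ip_conj_sym[of y z] V_add
  by simp

lemma ip_scale_right: "x \<in> V \<Longrightarrow> y \<in> V \<Longrightarrow> ip y (sc c x) = cnj c * ip y x"
  using ip_conj_sym[of "sc c x" y] ip_scale_left[of x y c] ip_conj_sym[of x y] V_scale by simp

lemma ip_minus_right: "x \<in> V \<Longrightarrow> y \<in> V \<Longrightarrow> ip y (- x) = - ip y x"
  using ip_scale_right[of x y "-1"] by simp

lemma ip_diff_right: "x \<in> V \<Longrightarrow> y \<in> V \<Longrightarrow> z \<in> V \<Longrightarrow> ip z (x - y) = ip z x - ip z y"
  using ip_add_right[of x "- y" z] ip_minus_right[of y z] V_minus by simp

lemma ip_self_real: "x \<in> V \<Longrightarrow> ip x x = complex_of_real (Re (ip x x))"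
  using ip_conj_sym[of x x] by (simp add: complex_eq_iff)

lemma ip_self_nonneg: "x \<in> V \<Longrightarrow> Re (ip x x) \<ge> 0"
  using ip_self_pos[of x] ip_zero_left V_zero by (cases "x = 0") force+

lemma ip_self_eq_zero_iff: "x \<in> V \<Longrightarrow> ip x x = 0 \<longleftrightarrow> x = 0"
  using ip_self_pos[of x] ip_zero_left V_zero by force

lemma nrm_sq: "x \<in> V \<Longrightarrow> (nrm x)\<^sup>2 = Re (ip x x)"
  unfolding inorm_def using ip_self_nonneg by simp

lemma nrm_nonneg: "x \<in> V \<Longrightarrow> nrm x \<ge> 0"
  unfolding inorm_def using ip_self_nonneg by simp

lemma nrm_zero: "nrm 0 = 0"
  unfolding inorm_def using ip_zero_left[OF V_zero] by simp

lemma ip_self_diff_scale: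
  assumes "e \<in> V" "s \<in> V"
  shows "ip (e - sc t s) (e - sc t s) = ip e e - cnj t * ip e s - t * cnj (ip e s) + t * cnj t * ip s s"
proof -
  have ts: "sc t s \<in> V" using V_scale assms by blast
  have "ip (e - sc t s) (e - sc t s) = (ip e e - ip e (sc t s)) - (ip (sc t s) e - ip (sc t s) (sc t s))"
    using ip_diff_left ip_diff_right assms ts V_diff by simp
  also have "\<dots> = (ip e e - cnj t * ip e s) - (t * ip s e - t * (cnj t * ip s s))"
    using ip_scale_left ip_scale_right assms ts by simp
  also have "ip s e = cnj (ip e s)" using ip_conj_sym assms by blast
  finally show ?thesis by (simp add: algebra_simps)
qed

lemma ip_self_diff_component:
  assumes "e \<in> V" "s \<in> V" "s \<noteq> 0"
  shows "Re (ip (e - sc (ip e s / ip s s) s) (e - sc (ip e s / ip s s) s))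
     = Re (ip e e) - (cmod (ip e s))\<^sup>2 / Re (ip s s)"
proof -
  define r where "r = Re (ip s s)"
  have r0: "r > 0" using ip_self_pos assms r_def by blast
  have ss: "ip s s = complex_of_real r" using ip_self_real assms r_def by blast
  define z where "z = ip e s"
  have zz: "z * cnj z = complex_of_real ((cmod z)\<^sup>2)" by (metis complex_norm_square)
  have "ip (e - sc (z / ip s s) s) (e - sc (z / ip s s) s)
     = ip e e - cnj (z / r) * z - (z / r) * cnj z + (z / r) * cnj (z / r) * r"
    using ip_self_diff_scale[OF assms(1,2), of "z / ip s s"] ss z_def by simp
  also have "\<dots> = ip e e - (z * cnj z) / r"
    using r0 by (simp add: field_simps)
  finally show ?thesis using zz z_def r_def by simp
qed

lemma cauchy_schwarz:
  assumes "x \<in> V" "y \<in> V"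
  shows "cmod (ip x y) \<le> nrm x * nrm y"
proof (cases "y = 0")
  case True
  then show ?thesis using ip_zero_right assms nrm_zero by simp
next
  case False
  have r0: "Re (ip y y) > 0" using ip_self_pos assms False by blast
  have "0 \<le> Re (ip (x - sc (ip x y / ip y y) y) (x - sc (ip x y / ip y y) y))"
    using ip_self_nonneg V_diff V_scale assms by blast
  then have "(cmod (ip x y))\<^sup>2 \<le> Re (ip x x) * Re (ip y y)"
    using ip_self_diff_component[OF assms False] r0 by (simp add: divide_le_eq)
  also have "\<dots> = (nrm x * nrm y)\<^sup>2" using nrm_sq assms by (simp add: power_mult_distrib)
  finally show ?thesis using nrm_nonneg assms
    by (meson mult_nonneg_nonneg power2_le_imp_le)
qed

lemma nrm_add_sq:
  assumes "x \<in> V" "y \<in> V"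
  shows "(nrm (x + y))\<^sup>2 = (nrm x)\<^sup>2 + 2 * Re (ip x y) + (nrm y)\<^sup>2"
proof -
  have "ip (x + y) (x + y) = ip x x + ip x y + (ip y x + ip y y)"
    using ip_add_left ip_add_right assms V_add by simp
  moreover have "Re (ip y x) = Re (ip x y)" using ip_conj_sym[of x y] assms by simp
  ultimately show ?thesis using nrm_sq assms V_add by simp
qed

lemma nrm_triangle:
  assumes "x \<in> V" "y \<in> V"
  shows "nrm (x + y) \<le> nrm x + nrm y"
proof -
  have "Re (ip x y) \<le> nrm x * nrm y"
    using cauchy_schwarz[OF assms] complex_Re_le_cmod order_trans by blast
  then have "(nrm (x + y))\<^sup>2 \<le> (nrm x + nrm y)\<^sup>2"
    using nrm_add_sq[OF assms] by (simp add: power2_sum)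
  then show ?thesis using nrm_nonneg assms by (meson add_nonneg_nonneg power2_le_imp_le)
qed

lemma nrm_scale: "x \<in> V \<Longrightarrow> nrm (sc c x) = cmod c * nrm x"
proof -
  assume x: "x \<in> V"
  have "ip (sc c x) (sc c x) = c * (cnj c * ip x x)" using ip_scale_left ip_scale_right x V_scale by simp
  also have "\<dots> = complex_of_real ((cmod c)\<^sup>2) * ip x x"
    by (metis mult.assoc complex_norm_square)
  finally have "Re (ip (sc c x) (sc c x)) = (cmod c)\<^sup>2 * Re (ip x x)" by simp
  then show ?thesis unfolding inorm_def by (simp add: real_sqrt_mult)
qed

lemma nrm_minus: "x \<in> V \<Longrightarrow> nrm (- x) = nrm x"
  using nrm_scale[of x "-1"] by simp

lemma nrm_minus_commute: "x \<in> V \<Longrightarrow> y \<in> V \<Longrightarrow> nrm (x - y) = nrm (y - x)"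
  using nrm_minus[of "y - x"] V_diff by simp

lemma parallelogram_law:
  assumes "x \<in> V" "y \<in> V"
  shows "(nrm (x + y))\<^sup>2 + (nrm (x - y))\<^sup>2 = 2 * (nrm x)\<^sup>2 + 2 * (nrm y)\<^sup>2"
proof -
  have "(nrm (x - y))\<^sup>2 = (nrm x)\<^sup>2 + 2 * Re (ip x (- y)) + (nrm (- y))\<^sup>2"
    using nrm_add_sq[of x "- y"] assms V_minus by simp
  moreover have "ip x (- y) = - ip x y" "nrm (- y) = nrm y"
    using ip_minus_right nrm_minus assms by auto
  ultimately show ?thesis using nrm_add_sq[OF assms] by simp
qed

lemma ip_tendsto_right:
  assumes "q \<in> V" "x \<in> V" "\<And>n. X n \<in> V" "(\<lambda>n. nrm (X n - x)) \<longlonglongrightarrow> 0"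
  shows "(\<lambda>n. ip q (X n)) \<longlonglongrightarrow> ip q x"
proof -
  have bound: "norm (ip q (X n) - ip q x) \<le> nrm q * nrm (X n - x)" for n
  proof -
    have "ip q (X n) - ip q x = ip q (X n - x)" using ip_diff_right[of "X n" x q] assms by simp
    then show ?thesis using cauchy_schwarz[of q "X n - x"] V_diff[of "X n" x] assms(1-3) by simp
  qed
  have lim: "(\<lambda>n. nrm q * nrm (X n - x)) \<longlonglongrightarrow> 0" by (rule tendsto_mult_right_zero[OF assms(4)])
  have "(\<lambda>n. norm (ip q (X n) - ip q x)) \<longlonglongrightarrow> 0"
    by (rule tendsto_sandwich[OF _ _ tendsto_const lim]) (use bound in \<open>simp_all add: always_eventually\<close>)
  then show ?thesis by (simp add: tendsto_norm_zero_iff LIM_zero_iff)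
qed

lemma ip_tendsto_left:
  assumes "q \<in> V" "x \<in> V" "\<And>n. X n \<in> V" "(\<lambda>n. nrm (X n - x)) \<longlonglongrightarrow> 0"
  shows "(\<lambda>n. ip (X n) q) \<longlonglongrightarrow> ip x q"
proof -
  have "ip (X n) q = cnj (ip q (X n))" for n using ip_conj_sym[of q "X n"] assms by simp
  moreover have "ip x q = cnj (ip q x)" using ip_conj_sym[of q x] assms by simp
  ultimately show ?thesis using tendsto_cnj[OF ip_tendsto_right[OF assms]] by simp
qed

lemma closed_subspace_complete:
  assumes T: "complete_subspace T" and ST: "S \<subseteq> T" and S0: "0 \<in> S"
    and S_add: "\<And>x y. x \<in> S \<Longrightarrow> y \<in> S \<Longrightarrow> x + y \<in> S"
    and S_scale: "\<And>c x. x \<in> S \<Longrightarrow> sc c x \<in> S"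
    and S_closed: "\<And>X x. (\<forall>n. X n \<in> S) \<Longrightarrow> x \<in> T \<Longrightarrow> (\<lambda>n. nrm (X n - x)) \<longlonglongrightarrow> 0 \<Longrightarrow> x \<in> S"
  shows "complete_subspace S"
  unfolding complete_subspace_def
proof (intro conjI allI impI ballI S0 S_add S_scale)
  show "S \<subseteq> V" using complete_subspaceD(1)[OF T] ST by blast
  fix X :: "nat \<Rightarrow> 'a"
  assume XS: "\<forall>n. X n \<in> S" and "\<forall>e>0. \<exists>N. \<forall>m\<ge>N. \<forall>n\<ge>N. nrm (X m - X n) < e"
  moreover have "\<forall>n. X n \<in> T" using XS ST by blast
  ultimately obtain L where "L \<in> T" "(\<lambda>n. nrm (X n - L)) \<longlonglongrightarrow> 0"
    using complete_subspaceD(5)[OF T] by blast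
  then show "\<exists>L\<in>S. (\<lambda>n. nrm (X n - L)) \<longlonglongrightarrow> 0" using S_closed[OF XS] by blast
qed

lemma scale_two: "sc 2 x = x + x"
  using scale_left_distrib[of 1 1 x] by (simp add: one_add_one)

lemma sq_dist_le_of_midpoint:
  assumes "x \<in> V" "s \<in> V" "t \<in> V" "0 \<le> d" "d \<le> nrm (x - sc (1/2) (s + t))"
  shows "(nrm (t - s))\<^sup>2 \<le> 2 * (nrm (x - s))\<^sup>2 + 2 * (nrm (x - t))\<^sup>2 - 4 * d\<^sup>2"
proof -
  define w where "w = sc (1/2) (s + t)"
  have "(x - s) + (x - t) = sc 2 (x - w)"
    unfolding w_def by (simp add: scale_right_diff_distrib scale_two algebra_simps)
  then have "nrm ((x - s) + (x - t)) = 2 * nrm (x - w)"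
    using nrm_scale[of "x - w" 2] assms V_diff V_scale V_add w_def by simp
  then have "(2 * d)\<^sup>2 \<le> (nrm ((x - s) + (x - t)))\<^sup>2"
    using assms(4,5) w_def by (intro power_mono) auto
  moreover have "(x - s) - (x - t) = t - s" by simp
  then have "(nrm ((x - s) + (x - t)))\<^sup>2 + (nrm (t - s))\<^sup>2
      = 2 * (nrm (x - s))\<^sup>2 + 2 * (nrm (x - t))\<^sup>2"
    using parallelogram_law[of "x - s" "x - t"] assms V_diff by simp
  ultimately show ?thesis by (simp add: power_mult_distrib)
qed

lemma closest_point_orthogonal:
  assumes S: "S \<subseteq> V" "\<And>x y. x \<in> S \<Longrightarrow> y \<in> S \<Longrightarrow> x + y \<in> S" "\<And>c x. x \<in> S \<Longrightarrow> sc c x \<in> S"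
    and x: "x \<in> V" and p: "p \<in> S" and closest: "\<And>s. s \<in> S \<Longrightarrow> nrm (x - p) \<le> nrm (x - s)"
    and t: "t \<in> S"
  shows "ip (x - p) t = 0"
proof (cases "t = 0")
  case True
  then show ?thesis using ip_zero_right V_diff x p S by blast
next
  case False
  define e where "e = x - p"
  define c where "c = ip e t / ip t t"
  have eV: "e \<in> V" and tV: "t \<in> V" unfolding e_def using V_diff x p t S by blast+
  have "p + sc c t \<in> S" using S p t by blast
  moreover have "x - (p + sc c t) = e - sc c t" unfolding e_def by (simp add: algebra_simps)
  ultimately have "nrm e \<le> nrm (e - sc c t)" using closest e_def by metis
  then have "(nrm e)\<^sup>2 \<le> (nrm (e - sc c t))\<^sup>2" using nrm_nonneg eV by (intro power_mono) auto
  then have "Re (ip e e) \<le> Re (ip e e) - (cmod (ip e t))\<^sup>2 / Re (ip t t)"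
    using nrm_sq eV V_diff V_scale tV ip_self_diff_component[OF eV tV False] c_def by simp
  moreover have "Re (ip t t) > 0" using ip_self_pos tV False by blast
  ultimately have "(cmod (ip e t))\<^sup>2 \<le> 0" by (simp add: divide_le_0_iff)
  then show ?thesis unfolding e_def by simp
qed

lemma minimizing_sequence_exists:
  assumes SV: "S \<subseteq> V" and S0: "0 \<in> S" and x: "x \<in> V"
  obtains d s where "0 \<le> d" and "\<And>t. t \<in> S \<Longrightarrow> d \<le> nrm (x - t)" and "\<And>n. s n \<in> S"
    and "\<And>n. nrm (x - s n) < sqrt (d\<^sup>2 + inverse (real (Suc n)))"
proof -
  define F where "F = (\<lambda>s. nrm (x - s)) ` S"
  have dist_nonneg: "0 \<le> nrm (x - s)" if "s \<in> S" for s using that nrm_nonneg V_diff x SV by blast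
  have d_le: "Inf F \<le> nrm (x - t)" if "t \<in> S" for t
    unfolding F_def using that dist_nonneg by (intro cInf_lower bdd_belowI[of _ 0]) auto
  have d0: "0 \<le> Inf F" unfolding F_def using S0 dist_nonneg by (intro cInf_greatest) auto
  have "\<exists>s\<in>S. nrm (x - s) < sqrt ((Inf F)\<^sup>2 + inverse (real (Suc n)))" for n
  proof -
    have "Inf F < sqrt ((Inf F)\<^sup>2 + inverse (real (Suc n)))"
      using real_sqrt_less_mono[of "(Inf F)\<^sup>2" "(Inf F)\<^sup>2 + inverse (real (Suc n))"] d0 by simp
    then show ?thesis using cInf_lessD[of F] S0 unfolding F_def by blast
  qed
  then obtain s where "\<And>n. s n \<in> S" "\<And>n. nrm (x - s n) < sqrt ((Inf F)\<^sup>2 + inverse (real (Suc n)))"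
    by metis
  then show thesis using that d0 d_le by blast
qed

lemma closest_point_exists:
  assumes S: "complete_subspace S" and x: "x \<in> V"
  shows "\<exists>p\<in>S. \<forall>s\<in>S. nrm (x - p) \<le> nrm (x - s)"
proof -
  note SV = complete_subspaceD(1)[OF S]
  define \<epsilon> :: "nat \<Rightarrow> real" where "\<epsilon> n = inverse (real (Suc n))" for n
  obtain d s where d0: "0 \<le> d" and d_le: "\<And>t. t \<in> S \<Longrightarrow> d \<le> nrm (x - t)" and s: "\<And>n. s n \<in> S"
    and s_close: "\<And>n. nrm (x - s n) < sqrt (d\<^sup>2 + \<epsilon> n)"
    using minimizing_sequence_exists[OF SV complete_subspaceD(2)[OF S] x] unfolding \<epsilon>_def by metis
  have s_sq: "(nrm (x - s n))\<^sup>2 \<le> d\<^sup>2 + \<epsilon> n" for n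
  proof -
    have "(nrm (x - s n))\<^sup>2 \<le> (sqrt (d\<^sup>2 + \<epsilon> n))\<^sup>2"
      using s_close[of n] nrm_nonneg V_diff x s SV by (intro power_mono) (auto simp: subset_iff)
    then show ?thesis unfolding \<epsilon>_def by simp
  qed
  have "(nrm (s m - s n))\<^sup>2 \<le> 2 * \<epsilon> m + 2 * \<epsilon> n" for m n
  proof -
    have "sc (1/2) (s n + s m) \<in> S" using s complete_subspaceD(3,4)[OF S] by blast
    then have "(nrm (s m - s n))\<^sup>2 \<le> 2 * (nrm (x - s n))\<^sup>2 + 2 * (nrm (x - s m))\<^sup>2 - 4 * d\<^sup>2"
      using sq_dist_le_of_midpoint[OF x _ _ d0 d_le] s SV by blast
    then show ?thesis using s_sq[of m] s_sq[of n] by linarith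
  qed
  then obtain p where p: "p \<in> S" and lim: "(\<lambda>n. nrm (s n - p)) \<longlonglongrightarrow> 0"
    using complete_subspaceD(5)[OF S] s Cauchy_of_sq_dist_bound[of "\<lambda>m n. nrm (s m - s n)"]
    unfolding \<epsilon>_def by blast
  have bound: "nrm (x - p) \<le> sqrt (d\<^sup>2 + \<epsilon> n) + nrm (s n - p)" for n
  proof -
    have "nrm (x - p) \<le> nrm (x - s n) + nrm (s n - p)"
      using nrm_triangle[of "x - s n" "s n - p"] V_diff x SV s p by (simp add: subset_iff)
    then show ?thesis using s_close[of n] by linarith
  qed
  have "(\<lambda>n. sqrt (d\<^sup>2 + \<epsilon> n) + nrm (s n - p)) \<longlonglongrightarrow> sqrt (d\<^sup>2 + 0) + 0"
    unfolding \<epsilon>_def by (intro tendsto_add tendsto_real_sqrt tendsto_const LIMSEQ_inverse_real_of_nat lim)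
  then have "nrm (x - p) \<le> sqrt (d\<^sup>2 + 0) + 0"
    by (rule LIMSEQ_le_const) (use bound in blast)
  then have "nrm (x - p) \<le> d" using d0 by simp
  then show ?thesis using p d_le by (meson order_trans)
qed

lemma orthogonal_projection_exists:
  assumes S: "complete_subspace S" and x: "x \<in> V"
  shows "\<exists>p\<in>S. \<forall>s\<in>S. ip (x - p) s = 0"
proof -
  obtain p where p: "p \<in> S" and closest: "\<forall>s\<in>S. nrm (x - p) \<le> nrm (x - s)"
    using closest_point_exists[OF assms] by blast
  have "ip (x - p) t = 0" if "t \<in> S" for t
    using closest_point_orthogonal[OF complete_subspaceD(1,3,4)[OF S] x p _ that] closest by blast
  with p show ?thesis by blast
qed

lemma complete_subspace_diff:
  assumes "complete_subspace B" "u \<in> B" "v \<in> B"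
  shows "u - v \<in> B"
  using complete_subspaceD(3)[OF assms(1,2) complete_subspaceD(4)[OF assms(1,3), of "-1"]] by simp

lemma representer_unique:
  assumes B: "complete_subspace B" and w: "w \<in> B" and w': "w' \<in> B"
    and eq: "\<And>u. u \<in> B \<Longrightarrow> ip u w = ip u w'"
  shows "w = w'"
proof -
  have d: "w - w' \<in> B" by (rule complete_subspace_diff[OF B w w'])
  have V: "w \<in> V" "w' \<in> V" "w - w' \<in> V" using d w w' complete_subspaceD(1)[OF B] by auto
  have "ip (w - w') (w - w') = ip (w - w') w - ip (w - w') w'" by (rule ip_diff_right[OF V])
  also have "\<dots> = 0" using eq[OF d] by simp
  finally show ?thesis using ip_self_eq_zero_iff[OF V(3)] by simp
qed

lemma ip_orthogonal_to_kernel: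
  assumes B: "complete_subspace B"
    and f_add: "\<And>u v. u \<in> B \<Longrightarrow> v \<in> B \<Longrightarrow> f (u + v) = f u + f v"
    and f_scale: "\<And>c u. u \<in> B \<Longrightarrow> f (sc c u) = c * f u"
    and z: "z \<in> B" "f z \<noteq> 0" and orth: "\<And>s. s \<in> B \<Longrightarrow> f s = 0 \<Longrightarrow> ip z s = 0"
    and u: "u \<in> B"
  shows "ip u z = f u / f z * ip z z"
proof -
  define c where "c = f u / f z"
  note B_scale = complete_subspaceD(4)[OF B]
  have uV: "u \<in> V" and zV: "z \<in> V" using u z complete_subspaceD(1)[OF B] by auto
  have "f (u - sc c z) = f u - c * f z"
    using f_add[OF u B_scale[OF B_scale[OF z(1)], of "-1"]] f_scale[OF B_scale[OF z(1)], of "-1"]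
      f_scale[OF z(1), of c] by simp
  then have "f (u - sc c z) = 0" using z(2) unfolding c_def by simp
  then have "ip z (u - sc c z) = 0" using orth complete_subspace_diff[OF B u B_scale[OF z(1)]] by blast
  then have "ip z u = cnj c * ip z z" using ip_diff_right[OF uV V_scale[OF zV] zV] ip_scale_right[OF zV zV]
    by simp
  moreover have "cnj (ip z z) = ip z z" using ip_conj_sym[OF zV zV] by simp
  ultimately show ?thesis using ip_conj_sym[OF zV uV] unfolding c_def by simp
qed

lemma kernel_complete_subspace:
  assumes B: "complete_subspace B"
    and f_add: "\<And>u v. u \<in> B \<Longrightarrow> v \<in> B \<Longrightarrow> f (u + v) = f u + f v"
    and f_scale: "\<And>c u. u \<in> B \<Longrightarrow> f (sc c u) = c * f u"
    and f_bound: "\<And>u. u \<in> B \<Longrightarrow> cmod (f u) \<le> K * nrm u"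
  shows "complete_subspace {u \<in> B. f u = 0}"
proof -
  have f_diff: "f (u - v) = f u - f v" if "u \<in> B" "v \<in> B" for u v
    using f_add[OF that(1) complete_subspaceD(4)[OF B that(2), of "-1"]] f_scale[OF that(2), of "-1"]
    by simp
  have f0: "f 0 = 0" using f_scale[OF complete_subspaceD(2)[OF B], of 0] by simp
  note BV = complete_subspaceD(1)[OF B]
  show ?thesis
  proof (rule closed_subspace_complete[OF B])
    fix X y assume X: "\<forall>n. X n \<in> {u \<in> B. f u = 0}" and y: "y \<in> B"
      and lim: "(\<lambda>n. nrm (X n - y)) \<longlonglongrightarrow> 0"
    have "cmod (f y) \<le> K * nrm (X n - y)" for n
    proof -
      have "X n \<in> B" "f (X n) = 0" using X by auto
      then show ?thesis
        using f_diff[OF y, of "X n"] f_bound[OF complete_subspace_diff[OF B y, of "X n"]]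
          nrm_minus_commute[of y "X n"] y BV[THEN subsetD] by auto
    qed
    moreover have "(\<lambda>n. K * nrm (X n - y)) \<longlonglongrightarrow> 0" by (rule tendsto_mult_right_zero[OF lim])
    ultimately have "cmod (f y) \<le> 0" using LIMSEQ_le_const by fastforce
    then show "y \<in> {u \<in> B. f u = 0}" using y by simp
  qed (use complete_subspaceD(2-4)[OF B] f_add f_scale f0 in auto)
qed

theorem riesz_representation:
  assumes B: "complete_subspace B"
    and f_add: "\<And>u v. u \<in> B \<Longrightarrow> v \<in> B \<Longrightarrow> f (u + v) = f u + f v"
    and f_scale: "\<And>c u. u \<in> B \<Longrightarrow> f (sc c u) = c * f u"
    and f_bound: "\<And>u. u \<in> B \<Longrightarrow> cmod (f u) \<le> K * nrm u"
  shows "\<exists>w\<in>B. \<forall>u\<in>B. f u = ip u w"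
proof (cases "\<forall>u\<in>B. f u = 0")
  case True
  then have "\<forall>u\<in>B. f u = ip u 0" using ip_zero_right complete_subspaceD(1)[OF B] by (auto simp: subset_iff)
  then show ?thesis using complete_subspaceD(2)[OF B] by blast
next
  case False
  then obtain x where x: "x \<in> B" "f x \<noteq> 0" by blast
  note BV = complete_subspaceD(1)[OF B]
  obtain p where p: "p \<in> B" "f p = 0" and p_orth: "\<forall>s\<in>{u \<in> B. f u = 0}. ip (x - p) s = 0"
    using orthogonal_projection_exists[OF kernel_complete_subspace[OF B f_add f_scale f_bound]] x BV
    by blast
  define z where "z = x - p"
  have zB: "z \<in> B" and zV: "z \<in> V" unfolding z_def using complete_subspace_diff[OF B x(1) p(1)] BV by auto
  have "f z = f x" unfolding z_def using f_add[OF x(1) complete_subspaceD(4)[OF B p(1), of "-1"]]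
      f_scale[OF p(1), of "-1"] p(2) by simp
  then have fz: "f z \<noteq> 0" using x(2) by simp
  moreover have "f 0 = 0" using f_scale[OF zB, of 0] by simp
  ultimately have "ip z z \<noteq> 0" using ip_self_eq_zero_iff[OF zV] by auto
  show ?thesis
  proof (intro bexI ballI)
    show "sc (cnj (f z / ip z z)) z \<in> B" using complete_subspaceD(4)[OF B zB] .
    fix u assume u: "u \<in> B"
    then have "ip u (sc (cnj (f z / ip z z)) z) = f z / ip z z * ip u z"
      using ip_scale_right[OF zV] BV by auto
    also have "\<dots> = f u"
      using ip_orthogonal_to_kernel[OF B f_add f_scale zB fz _ u] p_orth \<open>ip z z \<noteq> 0\<close> fz
      unfolding z_def by (simp add: field_simps)
    finally show "f u = ip u (sc (cnj (f z / ip z z)) z)" by simp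
  qed
qed

end

section \<open>Closed operators, adjoints and graph norms\<close>

lemma cHilbert_inner_space:
  assumes "cHilbert sc ip"
  shows "inner_space_on sc UNIV ip"
proof (intro inner_space_on.intro inner_space_on_axioms.intro)
  note H = assms[unfolded cHilbert_def]
  show "Vector_Spaces.vector_space sc" using H by (elim conjE)
  fix x y z c
  show "ip (x + y) z = ip x z + ip y z" using H by (elim conjE) blast
  show "ip (sc c x) y = c * ip x y" using H by (elim conjE) blast
  show "ip y x = cnj (ip x y)" using H by (elim conjE) blast
  show "x \<noteq> 0 \<Longrightarrow> Re (ip x x) > 0" using H by (elim conjE) blast
qed auto

lemma cHilbert_Cauchy_convergent:
  "cHilbert sc ip \<Longrightarrow> (\<forall>e>0. \<exists>N. \<forall>m\<ge>N. \<forall>n\<ge>N. inorm ip (X m - X n) < e)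
    \<Longrightarrow> \<exists>L. (\<lambda>n. inorm ip (X n - L)) \<longlonglongrightarrow> 0"
  unfolding cHilbert_def by blast

lemma mem_adjoint_op_iff:
  "(y, z) \<in> adjoint_op ip0 ip1 A \<longleftrightarrow> (\<forall>x w. (x, w) \<in> A \<longrightarrow> ip1 w y = ip0 x z)"
  unfolding adjoint_op_def by auto

lemma mem_adjoint_opI:
  "(\<And>x w. (x, w) \<in> A \<Longrightarrow> ip1 w y = ip0 x z) \<Longrightarrow> (y, z) \<in> adjoint_op ip0 ip1 A"
  unfolding mem_adjoint_op_iff by blast

lemma mem_adjoint_opD: "(y, z) \<in> adjoint_op ip0 ip1 A \<Longrightarrow> (x, w) \<in> A \<Longrightarrow> ip1 w y = ip0 x z"
  unfolding mem_adjoint_op_iff by blast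

lemma mem_neg_op_iff:
  fixes B :: "('x \<times> 'y::group_add) set"
  shows "(x, z) \<in> neg_op B \<longleftrightarrow> (x, - z) \<in> B"
  unfolding neg_op_def by force

locale hilbert_pair =
  fixes sc0 :: "complex \<Rightarrow> 'a::ab_group_add \<Rightarrow> 'a" and ip0 :: "'a \<Rightarrow> 'a \<Rightarrow> complex"
    and sc1 :: "complex \<Rightarrow> 'b::ab_group_add \<Rightarrow> 'b" and ip1 :: "'b \<Rightarrow> 'b \<Rightarrow> complex"
  assumes H0: "cHilbert sc0 ip0" and H1: "cHilbert sc1 ip1"
begin

sublocale h0: inner_space_on sc0 UNIV ip0 by (rule cHilbert_inner_space[OF H0])
sublocale h1: inner_space_on sc1 UNIV ip1 by (rule cHilbert_inner_space[OF H1])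

lemma hilbert_pair_swap: "hilbert_pair sc1 ip1 sc0 ip0"
  by (rule hilbert_pair.intro[OF H1 H0])

lemma lin_op_add: "lin_op sc0 sc1 A \<Longrightarrow> (x, y) \<in> A \<Longrightarrow> (x', y') \<in> A \<Longrightarrow> (x + x', y + y') \<in> A"
  unfolding lin_op_def by blast

lemma lin_op_scale: "lin_op sc0 sc1 A \<Longrightarrow> (x, y) \<in> A \<Longrightarrow> (sc0 c x, sc1 c y) \<in> A"
  unfolding lin_op_def by blast

lemma lin_op_minus: "lin_op sc0 sc1 A \<Longrightarrow> (x, y) \<in> A \<Longrightarrow> (- x, - y) \<in> A"
  using lin_op_scale[of A x y "-1"] by simp

lemma lin_op_single_valued:
  assumes A: "lin_op sc0 sc1 A" and "(x, y) \<in> A" "(x, y') \<in> A"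
  shows "y = y'"
proof -
  have "(0, y - y') \<in> A" using lin_op_add[OF A assms(2) lin_op_minus[OF A assms(3)]] by simp
  then have "y - y' = 0" using A unfolding lin_op_def by blast
  then show ?thesis by simp
qed

lemma opap_eq: "lin_op sc0 sc1 A \<Longrightarrow> (x, y) \<in> A \<Longrightarrow> opap A x = y"
  unfolding opap_def using lin_op_single_valued by blast

lemma opap_mem: "lin_op sc0 sc1 A \<Longrightarrow> x \<in> Domain A \<Longrightarrow> (x, opap A x) \<in> A"
  using opap_eq by (metis DomainE)

lemma Domain_zero: "lin_op sc0 sc1 A \<Longrightarrow> 0 \<in> Domain A"
  unfolding lin_op_def by blast

lemma Domain_add: "lin_op sc0 sc1 A \<Longrightarrow> x \<in> Domain A \<Longrightarrow> y \<in> Domain A \<Longrightarrow> x + y \<in> Domain A"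
  using lin_op_add by blast

lemma Domain_scale: "lin_op sc0 sc1 A \<Longrightarrow> x \<in> Domain A \<Longrightarrow> sc0 c x \<in> Domain A"
  using lin_op_scale by blast

lemma opap_add:
  assumes "lin_op sc0 sc1 A" "x \<in> Domain A" "y \<in> Domain A"
  shows "opap A (x + y) = opap A x + opap A y"
  using opap_eq[OF assms(1) lin_op_add[OF assms(1) opap_mem[OF assms(1,2)] opap_mem[OF assms(1,3)]]] .

lemma opap_scale:
  assumes "lin_op sc0 sc1 A" "x \<in> Domain A"
  shows "opap A (sc0 c x) = sc1 c (opap A x)"
  using opap_eq[OF assms(1) lin_op_scale[OF assms(1) opap_mem[OF assms]]] .

lemma opap_diff:
  assumes "lin_op sc0 sc1 A" "x \<in> Domain A" "y \<in> Domain A"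
  shows "opap A (x - y) = opap A x - opap A y"
  using opap_eq[OF assms(1) lin_op_add[OF assms(1) opap_mem[OF assms(1,2)]
      lin_op_minus[OF assms(1) opap_mem[OF assms(1,3)]]]]
  by simp

lemma graph_inner_space:
  assumes A: "lin_op sc0 sc1 A"
  shows "inner_space_on sc0 (Domain A) (gip ip0 ip1 A)"
proof (unfold_locales)
  fix x y z c
  show "0 \<in> Domain A" using Domain_zero[OF A] .
  show "x \<in> Domain A \<Longrightarrow> y \<in> Domain A \<Longrightarrow> x + y \<in> Domain A" using Domain_add[OF A] .
  show "x \<in> Domain A \<Longrightarrow> sc0 c x \<in> Domain A" using Domain_scale[OF A] .
  show "x \<in> Domain A \<Longrightarrow> y \<in> Domain A \<Longrightarrow> z \<in> Domain A \<Longrightarrow>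
      gip ip0 ip1 A (x + y) z = gip ip0 ip1 A x z + gip ip0 ip1 A y z"
    unfolding gip_def using opap_add[OF A] by (simp add: h0.ip_add_left h1.ip_add_left)
  show "x \<in> Domain A \<Longrightarrow> y \<in> Domain A \<Longrightarrow> gip ip0 ip1 A (sc0 c x) y = c * gip ip0 ip1 A x y"
    unfolding gip_def using opap_scale[OF A] by (simp add: h0.ip_scale_left h1.ip_scale_left distrib_left)
  show "gip ip0 ip1 A y x = cnj (gip ip0 ip1 A x y)"
    unfolding gip_def using h0.ip_conj_sym[of x y] h1.ip_conj_sym[of "opap A x" "opap A y"] by simp
  show "x \<in> Domain A \<Longrightarrow> x \<noteq> 0 \<Longrightarrow> 0 < Re (gip ip0 ip1 A x x)"
    unfolding gip_def using h0.ip_self_pos[of x] h1.ip_self_nonneg[of "opap A x"] by simp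
qed

lemma graph_norm_eq: "inorm (gip ip0 ip1 A) x = sqrt ((inorm ip0 x)\<^sup>2 + (inorm ip1 (opap A x))\<^sup>2)"
  using h0.nrm_sq h1.nrm_sq unfolding inorm_def gip_def by simp

lemma norm_le_graph_norm: "inorm ip0 x \<le> inorm (gip ip0 ip1 A) x"
  unfolding graph_norm_eq using h0.nrm_nonneg by (simp add: real_le_rsqrt)

lemma norm_opap_le_graph_norm: "inorm ip1 (opap A x) \<le> inorm (gip ip0 ip1 A) x"
  unfolding graph_norm_eq using h1.nrm_nonneg by (simp add: real_le_rsqrt)

lemma graph_norm_le: "inorm (gip ip0 ip1 A) x \<le> inorm ip0 x + inorm ip1 (opap A x)"
  unfolding graph_norm_eq using h0.nrm_nonneg h1.nrm_nonneg by (simp add: sqrt_sum_squares_le_sum)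

lemma closed_op_adjoint: "closed_op ip1 ip0 (adjoint_op ip0 ip1 A)"
  unfolding closed_op_def
proof (intro allI impI)
  fix Y Z y z
  assume mem: "\<forall>n. (Y n, Z n) \<in> adjoint_op ip0 ip1 A"
    and Y: "(\<lambda>n. inorm ip1 (Y n - y)) \<longlonglongrightarrow> 0" and Z: "(\<lambda>n. inorm ip0 (Z n - z)) \<longlonglongrightarrow> 0"
  show "(y, z) \<in> adjoint_op ip0 ip1 A"
  proof (rule mem_adjoint_opI)
    fix x w assume xw: "(x, w) \<in> A"
    have "(\<lambda>n. ip1 w (Y n)) = (\<lambda>n. ip0 x (Z n))" using mem_adjoint_opD[OF mem[rule_format] xw] by simp
    moreover have "(\<lambda>n. ip1 w (Y n)) \<longlonglongrightarrow> ip1 w y" by (rule h1.ip_tendsto_right[OF _ _ _ Y]) auto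
    moreover have "(\<lambda>n. ip0 x (Z n)) \<longlonglongrightarrow> ip0 x z" by (rule h0.ip_tendsto_right[OF _ _ _ Z]) auto
    ultimately show "ip1 w y = ip0 x z" using LIMSEQ_unique by metis
  qed
qed

lemma closed_op_neg_adjoint: "closed_op ip1 ip0 (neg_op (adjoint_op ip0 ip1 A))"
  unfolding closed_op_def
proof (intro allI impI)
  fix Y Z y z
  assume "\<forall>n. (Y n, Z n) \<in> neg_op (adjoint_op ip0 ip1 A)"
    and Y: "(\<lambda>n. inorm ip1 (Y n - y)) \<longlonglongrightarrow> 0" and Z: "(\<lambda>n. inorm ip0 (Z n - z)) \<longlonglongrightarrow> 0"
  then have "\<forall>n. (Y n, - Z n) \<in> adjoint_op ip0 ip1 A" by (simp add: mem_neg_op_iff)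
  moreover have "inorm ip0 (- Z n - - z) = inorm ip0 (Z n - z)" for n
  proof -
    have "- Z n - - z = - (Z n - z)" by simp
    then show ?thesis using h0.nrm_minus[of "Z n - z"] by simp
  qed
  ultimately have "(y, - z) \<in> adjoint_op ip0 ip1 A"
    using closed_op_adjoint[of A, unfolded closed_op_def, rule_format, of Y "\<lambda>n. - Z n" y "- z"] Y Z
    by simp
  then show "(y, z) \<in> neg_op (adjoint_op ip0 ip1 A)" by (simp add: mem_neg_op_iff)
qed

lemma lin_op_neg_adjoint:
  assumes B: "lin_op sc1 sc0 B" and sub: "neg_op (adjoint_op ip0 ip1 A) \<subseteq> B"
  shows "lin_op sc1 sc0 (neg_op (adjoint_op ip0 ip1 A))"
  unfolding lin_op_def mem_neg_op_iff mem_adjoint_op_iff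
proof (intro conjI allI impI)
  show "ip1 w 0 = ip0 x (- 0)" for x w using h0.ip_zero_right h1.ip_zero_right by simp
next
  fix y z y' z' x w
  assume "\<forall>x w. (x, w) \<in> A \<longrightarrow> ip1 w y = ip0 x (- z)" "\<forall>x w. (x, w) \<in> A \<longrightarrow> ip1 w y' = ip0 x (- z')"
    and "(x, w) \<in> A"
  then show "ip1 w (y + y') = ip0 x (- (z + z'))"
    by (simp add: h0.ip_add_right h1.ip_add_right h0.ip_minus_right h0.ip_diff_right)
next
  fix c y z x w
  assume "\<forall>x w. (x, w) \<in> A \<longrightarrow> ip1 w y = ip0 x (- z)" and "(x, w) \<in> A"
  then show "ip1 w (sc1 c y) = ip0 x (- sc0 c z)"
    by (simp add: h0.ip_scale_right h1.ip_scale_right h0.ip_minus_right)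
next
  fix y assume "\<forall>x w. (x, w) \<in> A \<longrightarrow> ip1 w 0 = ip0 x (- y)"
  then have "(0, y) \<in> neg_op (adjoint_op ip0 ip1 A)"
    unfolding mem_neg_op_iff mem_adjoint_op_iff by blast
  then show "y = 0" using sub B unfolding lin_op_def by blast
qed

lemma neg_adjoint_pairing:
  assumes "(y, z) \<in> neg_op (adjoint_op ip0 ip1 A)" and "(x, w) \<in> A"
  shows "ip1 y w + ip0 z x = 0"
proof -
  have "(y, - z) \<in> adjoint_op ip0 ip1 A" using assms(1) by (simp add: mem_neg_op_iff)
  from mem_adjoint_opD[OF this assms(2)] have "ip1 w y = ip0 x (- z)" .
  then have "cnj (ip1 w y) = - cnj (ip0 x z)" using h0.ip_minus_right[of z x] by simp
  moreover have "cnj (ip1 w y) = ip1 y w" "cnj (ip0 x z) = ip0 z x"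
    using h1.ip_conj_sym[of y w] h0.ip_conj_sym[of z x] by simp_all
  ultimately show ?thesis by simp
qed

context
  fixes A :: "('a \<times> 'b) set"
  assumes A: "lin_op sc0 sc1 A"
begin

interpretation graph: inner_space_on sc0 "Domain A" "gip ip0 ip1 A"
  by (rule graph_inner_space[OF A])

lemma graph_complete:
  assumes A_closed: "closed_op ip0 ip1 A"
  shows "graph.complete_subspace (Domain A)"
  unfolding graph.complete_subspace_def
proof (intro conjI allI impI ballI subset_refl Domain_zero[OF A] Domain_add[OF A] Domain_scale[OF A])
  fix X :: "nat \<Rightarrow> 'a"
  assume XA: "\<forall>n. X n \<in> Domain A"
    and cau: "\<forall>e>0. \<exists>N. \<forall>m\<ge>N. \<forall>n\<ge>N. inorm (gip ip0 ip1 A) (X m - X n) < e"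
  obtain x where x: "(\<lambda>n. inorm ip0 (X n - x)) \<longlonglongrightarrow> 0"
    using cHilbert_Cauchy_convergent[OF H0 Cauchy_if_dominated[OF cau norm_le_graph_norm]] by blast
  have "\<forall>e>0. \<exists>N. \<forall>m\<ge>N. \<forall>n\<ge>N. inorm ip1 (opap A (X m) - opap A (X n)) < e"
    using Cauchy_if_dominated[OF cau norm_opap_le_graph_norm] opap_diff[OF A] XA by simp
  from cHilbert_Cauchy_convergent[OF H1 this]
  obtain y where y: "(\<lambda>n. inorm ip1 (opap A (X n) - y)) \<longlonglongrightarrow> 0" by blast
  have "(x, y) \<in> A"
    using A_closed[unfolded closed_op_def, rule_format, of X "\<lambda>n. opap A (X n)" x y] x y opap_mem[OF A] XA
    by blast
  then have xA: "x \<in> Domain A" and Ax: "opap A x = y" using opap_eq[OF A] by auto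
  have "inorm (gip ip0 ip1 A) (X n - x) \<le> inorm ip0 (X n - x) + inorm ip1 (opap A (X n) - y)" for n
    using graph_norm_le[of A "X n - x"] opap_diff[OF A] XA xA Ax by simp
  moreover have lim: "(\<lambda>n. inorm ip0 (X n - x) + inorm ip1 (opap A (X n) - y)) \<longlonglongrightarrow> 0"
    using tendsto_add[OF x y] by simp
  ultimately have "(\<lambda>n. inorm (gip ip0 ip1 A) (X n - x)) \<longlonglongrightarrow> 0"
    by (intro tendsto_sandwich[OF _ _ tendsto_const lim] always_eventually allI graph.nrm_nonneg)
      (use XA xA Domain_add Domain_scale graph.V_diff in auto)
  then show "\<exists>L\<in>Domain A. (\<lambda>n. inorm (gip ip0 ip1 A) (X n - L)) \<longlonglongrightarrow> 0" using xA by blast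
qed

lemma graph_representation:
  assumes A_closed: "closed_op ip0 ip1 A"
  shows "\<exists>u\<in>Domain A. \<forall>v\<in>Domain A. ip0 v x + ip1 (opap A v) y = gip ip0 ip1 A v u"
proof (rule graph.riesz_representation[OF graph_complete[OF A_closed],
      where K = "inorm ip0 x + inorm ip1 y"])
  fix v w assume "v \<in> Domain A" "w \<in> Domain A"
  then show "ip0 (v + w) x + ip1 (opap A (v + w)) y
      = (ip0 v x + ip1 (opap A v) y) + (ip0 w x + ip1 (opap A w) y)"
    using opap_add[OF A] by (simp add: h0.ip_add_left h1.ip_add_left)
next
  fix c v assume "v \<in> Domain A"
  then show "ip0 (sc0 c v) x + ip1 (opap A (sc0 c v)) y = c * (ip0 v x + ip1 (opap A v) y)"
    using opap_scale[OF A] by (simp add: h0.ip_scale_left h1.ip_scale_left distrib_left)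
next
  fix v
  have "cmod (ip0 v x + ip1 (opap A v) y) \<le> inorm ip0 v * inorm ip0 x + inorm ip1 (opap A v) * inorm ip1 y"
    using h0.cauchy_schwarz[of v x] h1.cauchy_schwarz[of "opap A v" y]
    by (intro order_trans[OF norm_triangle_ineq add_mono]) auto
  also have "\<dots> \<le> inorm (gip ip0 ip1 A) v * inorm ip0 x + inorm (gip ip0 ip1 A) v * inorm ip1 y"
    by (intro add_mono mult_right_mono norm_le_graph_norm norm_opap_le_graph_norm)
      (simp_all add: h0.nrm_nonneg h1.nrm_nonneg)
  finally show "cmod (ip0 v x + ip1 (opap A v) y) \<le> (inorm ip0 x + inorm ip1 y) * inorm (gip ip0 ip1 A) v"
    by (simp add: algebra_simps)
qed

lemma closed_op_adjoint_adjoint: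
  assumes A_closed: "closed_op ip0 ip1 A" and xy: "(x, y) \<in> adjoint_op ip1 ip0 (adjoint_op ip0 ip1 A)"
  shows "(x, y) \<in> A"
proof -
  obtain u where u: "u \<in> Domain A"
    and rep: "\<And>v. v \<in> Domain A \<Longrightarrow> ip0 v x + ip1 (opap A v) y = gip ip0 ip1 A v u"
    using graph_representation[OF A_closed] by blast
  define x' y' where "x' = x - u" and "y' = y - opap A u"
  \<comment> \<open>(x', y') is orthogonal to the graph of A, while (x, y) in A** lets it pair with itself.\<close>
  have orth: "ip1 w y' = ip0 v (- x')" if vw: "(v, w) \<in> A" for v w
  proof -
    have "ip0 v x + ip1 w y = ip0 v u + ip1 w (opap A u)"
      using rep[of v] opap_eq[OF A vw] vw unfolding gip_def by auto
    then show ?thesis unfolding x'_def y'_def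
      by (simp add: h0.ip_diff_right h1.ip_diff_right h0.ip_minus_right algebra_simps)
  qed
  then have adj: "(y', - x') \<in> adjoint_op ip0 ip1 A" by (rule mem_adjoint_opI)
  have "ip0 (- x') x = ip1 y' y" by (rule mem_adjoint_opD[OF xy adj])
  moreover have "ip0 (- x') u = ip1 y' (opap A u)"
  proof -
    have "ip1 (opap A u) y' = ip0 u (- x')" using orth opap_mem[OF A u] by blast
    then show ?thesis using h0.ip_conj_sym[of u "- x'"] h1.ip_conj_sym[of "opap A u" y'] by simp
  qed
  ultimately have "ip0 (- x') x' = ip1 y' y'"
    unfolding x'_def y'_def by (simp add: h0.ip_diff_right h1.ip_diff_right)
  then have "ip1 y' y' = - ip0 x' x'" by (simp add: h0.ip_minus_left)
  then have "Re (ip1 y' y') = - Re (ip0 x' x')" by simp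
  then have "Re (ip0 x' x') = 0" "Re (ip1 y' y') = 0"
    using h0.ip_self_nonneg[of x'] h1.ip_self_nonneg[of y'] by auto
  then have "x' = 0" "y' = 0" using h0.ip_self_pos[of x'] h1.ip_self_pos[of y'] by force+
  then show ?thesis using opap_mem[OF A u] unfolding x'_def y'_def by simp
qed

end

section \<open>Boundary data spaces\<close>

lemma BD_subset: "BD ip0 ip1 A A0 \<subseteq> Domain A"
  unfolding BD_def by blast

lemma BD_Domain: "u \<in> BD ip0 ip1 A A0 \<Longrightarrow> u \<in> Domain A"
  unfolding BD_def by blast

lemma BD_orthogonal: "u \<in> BD ip0 ip1 A A0 \<Longrightarrow> w \<in> Domain A0 \<Longrightarrow> gip ip0 ip1 A u w = 0"
  unfolding BD_def by blast

context
  fixes A A0 :: "('a \<times> 'b) set"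
  assumes A: "lin_op sc0 sc1 A" and A0_subset: "A0 \<subseteq> A"
begin

interpretation graph: inner_space_on sc0 "Domain A" "gip ip0 ip1 A"
  by (rule graph_inner_space[OF A])

lemma Domain_A0_subset: "Domain A0 \<subseteq> Domain A"
  using A0_subset by blast

lemma Domain0_Domain: "w \<in> Domain A0 \<Longrightarrow> w \<in> Domain A"
  using Domain_A0_subset by blast

lemma BD_zero: "0 \<in> BD ip0 ip1 A A0"
  unfolding BD_def using graph.V_zero graph.ip_zero_left Domain_A0_subset by blast

lemma BD_add:
  assumes u: "u \<in> BD ip0 ip1 A A0" and v: "v \<in> BD ip0 ip1 A A0"
  shows "u + v \<in> BD ip0 ip1 A A0"
proof -
  have "gip ip0 ip1 A (u + v) w = 0" if "w \<in> Domain A0" for w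
    using graph.ip_add_left[OF BD_Domain[OF u] BD_Domain[OF v] Domain0_Domain[OF that]]
      BD_orthogonal[OF u that] BD_orthogonal[OF v that] by simp
  then show ?thesis unfolding BD_def using graph.V_add[OF BD_Domain[OF u] BD_Domain[OF v]] by blast
qed

lemma BD_scale:
  assumes u: "u \<in> BD ip0 ip1 A A0"
  shows "sc0 c u \<in> BD ip0 ip1 A A0"
proof -
  have "gip ip0 ip1 A (sc0 c u) w = 0" if "w \<in> Domain A0" for w
    using graph.ip_scale_left[OF BD_Domain[OF u] Domain0_Domain[OF that]] BD_orthogonal[OF u that] by simp
  then show ?thesis unfolding BD_def using graph.V_scale[OF BD_Domain[OF u]] by blast
qed

lemma BD_diff: "u \<in> BD ip0 ip1 A A0 \<Longrightarrow> v \<in> BD ip0 ip1 A A0 \<Longrightarrow> u - v \<in> BD ip0 ip1 A A0"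
  using BD_add[of u "sc0 (-1) v"] BD_scale[of v "-1"] by simp

lemma BD_complete:
  assumes A_closed: "closed_op ip0 ip1 A"
  shows "graph.complete_subspace (BD ip0 ip1 A A0)"
proof (rule graph.closed_subspace_complete[OF graph_complete[OF A A_closed]
      BD_subset BD_zero BD_add BD_scale])
  fix X x assume X: "\<forall>n. X n \<in> BD ip0 ip1 A A0" and x: "x \<in> Domain A"
    and lim: "(\<lambda>n. inorm (gip ip0 ip1 A) (X n - x)) \<longlonglongrightarrow> 0"
  show "x \<in> BD ip0 ip1 A A0"
    unfolding BD_def
  proof (intro CollectI conjI x ballI)
    fix w assume w: "w \<in> Domain A0"
    have "(\<lambda>n. gip ip0 ip1 A (X n) w) \<longlonglongrightarrow> gip ip0 ip1 A x w"
      by (rule graph.ip_tendsto_left[OF Domain0_Domain[OF w] x _ lim]) (use X BD_Domain in blast)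
    moreover have "(\<lambda>n. gip ip0 ip1 A (X n) w) = (\<lambda>n. 0)" using BD_orthogonal[OF _ w] X by simp
    ultimately show "gip ip0 ip1 A x w = 0" using LIMSEQ_unique tendsto_const by metis
  qed
qed

lemma piBD_eqI:
  assumes u: "u \<in> Domain A" and w: "w \<in> BD ip0 ip1 A A0"
    and orth: "\<And>z. z \<in> BD ip0 ip1 A A0 \<Longrightarrow> gip ip0 ip1 A (u - w) z = 0"
  shows "piBD ip0 ip1 A A0 u = w"
  unfolding piBD_def
proof (rule the_equality)
  show "w \<in> BD ip0 ip1 A A0 \<and> (\<forall>z\<in>BD ip0 ip1 A A0. gip ip0 ip1 A (u - w) z = 0)" using w orth by blast
  fix w' assume w': "w' \<in> BD ip0 ip1 A A0 \<and> (\<forall>z\<in>BD ip0 ip1 A A0. gip ip0 ip1 A (u - w') z = 0)"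
  then have d: "w - w' \<in> BD ip0 ip1 A A0" using BD_diff w by blast
  then have dA: "w - w' \<in> Domain A" and wA: "w \<in> Domain A" and w'A: "w' \<in> Domain A"
    using w w' BD_Domain by blast+
  have "(u - w') - (u - w) = w - w'" by simp
  then have "gip ip0 ip1 A (w - w') (w - w')
      = gip ip0 ip1 A (u - w') (w - w') - gip ip0 ip1 A (u - w) (w - w')"
    using graph.ip_diff_left[of "u - w'" "u - w" "w - w'"] graph.V_diff u wA w'A dA by simp
  also have "\<dots> = 0" using w' orth[OF d] d by simp
  finally show "w' = w" using graph.ip_self_eq_zero_iff[OF dA] by simp
qed

lemma piBD_of_BD: "u \<in> BD ip0 ip1 A A0 \<Longrightarrow> piBD ip0 ip1 A A0 u = u"
  by (rule piBD_eqI[OF BD_Domain]) (simp_all add: graph.ip_zero_left BD_Domain)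

lemma piBD_of_Domain0:
  assumes u: "u \<in> Domain A0"
  shows "piBD ip0 ip1 A A0 u = 0"
proof (rule piBD_eqI[OF _ BD_zero])
  show uA: "u \<in> Domain A" using Domain0_Domain[OF u] .
  fix z assume z: "z \<in> BD ip0 ip1 A A0"
  have "gip ip0 ip1 A u z = cnj (gip ip0 ip1 A z u)"
    using graph.ip_conj_sym[OF BD_Domain[OF z] uA] .
  then show "gip ip0 ip1 A (u - 0) z = 0" using BD_orthogonal[OF z u] by simp
qed

lemma piBD_decomposition:
  assumes A_closed: "closed_op ip0 ip1 A" and A0: "lin_op sc0 sc1 A0" and A0_closed: "closed_op ip0 ip1 A0"
    and u: "u \<in> Domain A"
  shows "piBD ip0 ip1 A A0 u \<in> BD ip0 ip1 A A0 \<and> u - piBD ip0 ip1 A A0 u \<in> Domain A0"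
proof -
  have "graph.complete_subspace (Domain A0)"
  proof (rule graph.closed_subspace_complete[OF graph_complete[OF A A_closed] Domain_A0_subset
        Domain_zero[OF A0] Domain_add[OF A0] Domain_scale[OF A0]])
    fix X x assume X: "\<forall>n. X n \<in> Domain A0" and x: "x \<in> Domain A"
      and lim: "(\<lambda>n. inorm (gip ip0 ip1 A) (X n - x)) \<longlonglongrightarrow> 0"
    have XA: "X n \<in> Domain A" for n using X Domain0_Domain by blast
    have "(X n, opap A (X n)) \<in> A0" for n
      using X opap_eq[OF A] A0_subset by (metis DomainE subsetD)
    moreover have "(\<lambda>n. inorm ip0 (X n - x)) \<longlonglongrightarrow> 0"
      by (rule LIMSEQ_zero_squeeze[OF _ norm_le_graph_norm lim]) (simp add: h0.nrm_nonneg)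
    moreover have "(\<lambda>n. inorm ip1 (opap A (X n) - opap A x)) \<longlonglongrightarrow> 0"
      using opap_diff[OF A XA x] norm_opap_le_graph_norm[of A "X n - x" for n]
      by (intro LIMSEQ_zero_squeeze[OF _ _ lim]) (auto simp: h1.nrm_nonneg)
    ultimately have "(x, opap A x) \<in> A0"
      using A0_closed[unfolded closed_op_def, rule_format, of X "\<lambda>n. opap A (X n)" x "opap A x"] by blast
    then show "x \<in> Domain A0" by blast
  qed
  then obtain p where p: "p \<in> Domain A0" and orth: "\<forall>s\<in>Domain A0. gip ip0 ip1 A (u - p) s = 0"
    using graph.orthogonal_projection_exists u by blast
  have pA: "p \<in> Domain A" using Domain0_Domain[OF p] .
  have up: "u - p \<in> BD ip0 ip1 A A0" unfolding BD_def using orth graph.V_diff u pA by blast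
  have "piBD ip0 ip1 A A0 u = u - p"
  proof (rule piBD_eqI[OF u up])
    fix z assume z: "z \<in> BD ip0 ip1 A A0"
    have "gip ip0 ip1 A p z = cnj (gip ip0 ip1 A z p)"
      using graph.ip_conj_sym[OF BD_Domain[OF z] pA] .
    then show "gip ip0 ip1 A (u - (u - p)) z = 0" using BD_orthogonal[OF z p] by simp
  qed
  then show ?thesis using up p by simp
qed

lemma kappa_adj_characterization:
  fixes scH :: "complex \<Rightarrow> 'c::ab_group_add \<Rightarrow> 'c" and ipH and \<kappa> :: "'a \<Rightarrow> 'c"
  assumes A_closed: "closed_op ip0 ip1 A" and HH: "cHilbert scH ipH"
    and \<kappa>_add: "\<forall>u\<in>BD ip0 ip1 A A0. \<forall>v\<in>BD ip0 ip1 A A0. \<kappa> (u + v) = \<kappa> u + \<kappa> v"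
    and \<kappa>_scale: "\<forall>c. \<forall>u\<in>BD ip0 ip1 A A0. \<kappa> (sc0 c u) = scH c (\<kappa> u)"
    and \<kappa>_bd: "\<exists>C. \<forall>u\<in>BD ip0 ip1 A A0. inorm ipH (\<kappa> u) \<le> C * sqrt (Re (gip ip0 ip1 A u u))"
  shows "kappa_adj ip0 ip1 A A0 ipH \<kappa> \<psi> \<in> BD ip0 ip1 A A0 \<and>
    (\<forall>u\<in>BD ip0 ip1 A A0. ipH (\<kappa> u) \<psi> = gip ip0 ip1 A u (kappa_adj ip0 ip1 A A0 ipH \<kappa> \<psi>))"
proof -
  interpret H: inner_space_on scH UNIV ipH by (rule cHilbert_inner_space[OF HH])
  obtain C where C: "\<And>u. u \<in> BD ip0 ip1 A A0 \<Longrightarrow> inorm ipH (\<kappa> u) \<le> C * inorm (gip ip0 ip1 A) u"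
    using \<kappa>_bd unfolding inorm_def by blast
  have "\<exists>w\<in>BD ip0 ip1 A A0. \<forall>u\<in>BD ip0 ip1 A A0. ipH (\<kappa> u) \<psi> = gip ip0 ip1 A u w"
  proof (rule graph.riesz_representation[OF BD_complete[OF A_closed], where K = "C * inorm ipH \<psi>"])
    fix u v assume "u \<in> BD ip0 ip1 A A0" "v \<in> BD ip0 ip1 A A0"
    then show "ipH (\<kappa> (u + v)) \<psi> = ipH (\<kappa> u) \<psi> + ipH (\<kappa> v) \<psi>" using \<kappa>_add by (simp add: H.ip_add_left)
  next
    fix c u assume "u \<in> BD ip0 ip1 A A0"
    then show "ipH (\<kappa> (sc0 c u)) \<psi> = c * ipH (\<kappa> u) \<psi>" using \<kappa>_scale by (simp add: H.ip_scale_left)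
  next
    fix u assume u: "u \<in> BD ip0 ip1 A A0"
    have "cmod (ipH (\<kappa> u) \<psi>) \<le> inorm ipH (\<kappa> u) * inorm ipH \<psi>" by (rule H.cauchy_schwarz) auto
    also have "\<dots> \<le> C * inorm (gip ip0 ip1 A) u * inorm ipH \<psi>"
      by (rule mult_right_mono[OF C[OF u] H.nrm_nonneg]) simp
    finally show "cmod (ipH (\<kappa> u) \<psi>) \<le> C * inorm ipH \<psi> * inorm (gip ip0 ip1 A) u"
      by (simp add: mult_ac)
  qed
  then obtain w where w: "w \<in> BD ip0 ip1 A A0" and rep: "\<forall>u\<in>BD ip0 ip1 A A0. ipH (\<kappa> u) \<psi> = gip ip0 ip1 A u w"
    by blast
  have "kappa_adj ip0 ip1 A A0 ipH \<kappa> \<psi> = w"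
    unfolding kappa_adj_def
  proof (rule the_equality)
    show "w \<in> BD ip0 ip1 A A0 \<and> (\<forall>u\<in>BD ip0 ip1 A A0. ipH (\<kappa> u) \<psi> = gip ip0 ip1 A u w)" using w rep by blast
    fix w' assume w': "w' \<in> BD ip0 ip1 A A0 \<and> (\<forall>u\<in>BD ip0 ip1 A A0. ipH (\<kappa> u) \<psi> = gip ip0 ip1 A u w')"
    show "w' = w" by (rule graph.representer_unique[OF BD_complete[OF A_closed]]) (use w' w rep in auto)
  qed
  then show ?thesis using w rep by simp
qed

end

end

section \<open>The Dirichlet-to-Neumann graph\<close>

locale boundary_pair = hilbert_pair +
  fixes G D
  assumes G_op: "lin_op sc0 sc1 G" and G_closed: "closed_op ip0 ip1 G"
    and D_op: "lin_op sc1 sc0 D" and D_closed: "closed_op ip1 ip0 D"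
    and D0_subset: "neg_op (adjoint_op ip0 ip1 G) \<subseteq> D"
begin

text \<open>G0 and D0 are the operators written with a ring accent in the paper.\<close>
abbreviation "G0 \<equiv> neg_op (adjoint_op ip1 ip0 D)"
abbreviation "D0 \<equiv> neg_op (adjoint_op ip0 ip1 G)"
abbreviation "BD_G \<equiv> BD ip0 ip1 G G0"
abbreviation "BD_D \<equiv> BD ip1 ip0 D D0"
abbreviation "proj_G \<equiv> piBD ip0 ip1 G G0"
abbreviation "proj_D \<equiv> piBD ip1 ip0 D D0"

sublocale dual: hilbert_pair sc1 ip1 sc0 ip0
  by (rule hilbert_pair_swap)

sublocale graph_G: inner_space_on sc0 "Domain G" "gip ip0 ip1 G"
  by (rule graph_inner_space[OF G_op])

lemma G0_subset: "G0 \<subseteq> G"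
proof
  fix p assume p: "p \<in> G0"
  obtain v t where pvt: "p = (v, t)" by (cases p)
  have vt: "(v, - t) \<in> adjoint_op ip1 ip0 D" using p pvt by (simp add: mem_neg_op_iff)
  have "(v, t) \<in> adjoint_op ip1 ip0 (adjoint_op ip0 ip1 G)"
  proof (rule mem_adjoint_opI)
    fix y w assume "(y, w) \<in> adjoint_op ip0 ip1 G"
    then have "(y, - w) \<in> D" using D0_subset by (auto simp: mem_neg_op_iff)
    then have "ip0 (- w) v = ip1 y (- t)" by (rule mem_adjoint_opD[OF vt])
    then show "ip0 w v = ip1 y t" by (simp add: h0.ip_minus_left h1.ip_minus_right)
  qed
  then show "p \<in> G" using closed_op_adjoint_adjoint[OF G_op G_closed] pvt by blast
qed

lemma boundary_pair_swap: "boundary_pair sc1 ip1 sc0 ip0 D G"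
  by (intro boundary_pair.intro boundary_pair_axioms.intro hilbert_pair_swap
      D_op D_closed G_op G_closed G0_subset)

lemma G0_graph: "v \<in> Domain G0 \<Longrightarrow> (v, opap G v) \<in> G0"
  using G0_subset opap_eq[OF G_op] by blast

lemma D0_graph: "q \<in> Domain D0 \<Longrightarrow> (q, opap D q) \<in> D0"
  by (rule boundary_pair.G0_graph[OF boundary_pair_swap])

lemma proj_G_decomposition: "v \<in> Domain G \<Longrightarrow> proj_G v \<in> BD_G \<and> v - proj_G v \<in> Domain G0"
  by (rule piBD_decomposition[OF G_op G0_subset G_closed
        dual.lin_op_neg_adjoint[OF G_op G0_subset] dual.closed_op_neg_adjoint])

lemma proj_G_of_BD: "v \<in> BD_G \<Longrightarrow> proj_G v = v"
  by (rule piBD_of_BD[OF G_op G0_subset])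

lemma proj_G_of_G0: "v \<in> Domain G0 \<Longrightarrow> proj_G v = 0"
  by (rule piBD_of_Domain0[OF G_op G0_subset])

lemma BD_G_graph_D:
  assumes w: "w \<in> BD_G"
  shows "(opap G w, w) \<in> D"
proof (rule dual.closed_op_adjoint_adjoint[OF D_op D_closed])
  show "(opap G w, w) \<in> adjoint_op ip0 ip1 (adjoint_op ip1 ip0 D)"
  proof (rule mem_adjoint_opI)
    fix z t assume "(z, t) \<in> adjoint_op ip1 ip0 D"
    then have zt: "(z, - t) \<in> G0" by (simp add: mem_neg_op_iff)
    then have "opap G z = - t" using G0_subset opap_eq[OF G_op] by blast
    moreover have "gip ip0 ip1 G w z = 0" using BD_orthogonal[OF w] zt by blast
    ultimately have "ip0 w z + ip1 (opap G w) (- t) = 0" unfolding gip_def by simp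
    then have "ip0 w z = ip1 (opap G w) t" by (simp add: h1.ip_minus_right)
    then show "ip1 t (opap G w) = ip0 z w"
      using h0.ip_conj_sym[of w z] h1.ip_conj_sym[of "opap G w" t] by simp
  qed
qed

lemma G_maps_BD:
  assumes w: "w \<in> BD_G"
  shows "opap G w \<in> BD_D"
proof -
  have wD: "(opap G w, w) \<in> D" by (rule BD_G_graph_D[OF w])
  have "gip ip1 ip0 D (opap G w) q = 0" if q: "q \<in> Domain D0" for q
  proof -
    have "ip1 q (opap G w) + ip0 (opap D q) w = 0"
      by (rule neg_adjoint_pairing[OF D0_graph[OF q] opap_mem[OF G_op BD_Domain[OF w]]])
    then have "cnj (ip1 q (opap G w)) + cnj (ip0 (opap D q) w) = 0"
      by (metis complex_cnj_add complex_cnj_zero)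
    moreover have "cnj (ip1 q (opap G w)) = ip1 (opap G w) q" "cnj (ip0 (opap D q) w) = ip0 w (opap D q)"
      using h1.ip_conj_sym[of "opap G w" q] h0.ip_conj_sym[of w "opap D q"] by simp_all
    ultimately show ?thesis unfolding gip_def dual.opap_eq[OF D_op wD] by simp
  qed
  then show ?thesis unfolding BD_def using wD by blast
qed

lemma proj_D_decomposition: "q \<in> Domain D \<Longrightarrow> proj_D q \<in> BD_D \<and> q - proj_D q \<in> Domain D0"
  by (rule boundary_pair.proj_G_decomposition[OF boundary_pair_swap])

lemma BD_D_graph_G: "z \<in> BD_D \<Longrightarrow> (opap D z, z) \<in> G"
  by (rule boundary_pair.BD_G_graph_D[OF boundary_pair_swap])

lemma D_maps_BD: "z \<in> BD_D \<Longrightarrow> opap D z \<in> BD_G"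
  by (rule boundary_pair.G_maps_BD[OF boundary_pair_swap])

theorem green_formula:
  assumes q: "q \<in> Domain D" and v: "v \<in> Domain G"
  shows "ip1 q (opap G v) + ip0 (opap D q) v = gip ip0 ip1 G (opap D (proj_D q)) (proj_G v)"
proof -
  define q1 q2 v1 v2 where "q1 = proj_D q" and "q2 = q - q1" and "v1 = proj_G v" and "v2 = v - v1"
  have q1: "q1 \<in> BD_D" and q2: "q2 \<in> Domain D0"
    using proj_D_decomposition[OF q] unfolding q1_def q2_def by auto
  have v1: "v1 \<in> BD_G" and v2: "v2 \<in> Domain G0"
    using proj_G_decomposition[OF v] unfolding v1_def v2_def by auto
  have q1D: "q1 \<in> Domain D" and q2D: "q2 \<in> Domain D"
    using dual.BD_Domain[OF q1] q2 D0_subset by blast+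
  have v1G: "v1 \<in> Domain G" and v2G: "v2 \<in> Domain G"
    using BD_Domain[OF v1] v2 G0_subset by blast+
  have "ip1 q (opap G v) + ip0 (opap D q) v = ip1 (q1 + q2) (opap G v) + ip0 (opap D q1 + opap D q2) v"
    using dual.opap_add[OF D_op q1D q2D] by (simp add: q2_def)
  also have "\<dots> = (ip1 q1 (opap G v) + ip0 (opap D q1) v) + (ip1 q2 (opap G v) + ip0 (opap D q2) v)"
    by (simp add: h0.ip_add_left h1.ip_add_left)
  also have "ip1 q2 (opap G v) + ip0 (opap D q2) v = 0"
    by (rule neg_adjoint_pairing[OF D0_graph[OF q2] opap_mem[OF G_op v]])
  also have "ip1 q1 (opap G v) + ip0 (opap D q1) v
      = ip1 q1 (opap G v1 + opap G v2) + ip0 (opap D q1) (v1 + v2)"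
    using opap_add[OF G_op v1G v2G] by (simp add: v2_def)
  also have "\<dots> = (ip1 q1 (opap G v1) + ip0 (opap D q1) v1) + (ip1 q1 (opap G v2) + ip0 (opap D q1) v2)"
    by (simp add: h0.ip_add_right h1.ip_add_right)
  also have "ip1 q1 (opap G v2) + ip0 (opap D q1) v2 = 0"
  proof -
    have "ip0 v2 (opap D q1) + ip1 (opap G v2) q1 = 0"
      by (rule dual.neg_adjoint_pairing[OF G0_graph[OF v2] dual.opap_mem[OF D_op q1D]])
    then have "cnj (ip0 v2 (opap D q1)) + cnj (ip1 (opap G v2) q1) = 0"
      by (metis complex_cnj_add complex_cnj_zero)
    then show ?thesis using h0.ip_conj_sym[of v2 "opap D q1"] h1.ip_conj_sym[of "opap G v2" q1]
      by (simp add: add.commute)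
  qed
  also have "ip1 q1 (opap G v1) + ip0 (opap D q1) v1 = gip ip0 ip1 G (opap D q1) v1"
    unfolding gip_def opap_eq[OF G_op BD_D_graph_G[OF q1]] by simp
  finally show ?thesis unfolding q1_def v1_def by simp
qed

lemma weak_equation:
  assumes "\<And>v. v \<in> Domain G0 \<Longrightarrow> ip1 q (opap G v) + ip0 p v = 0"
  shows "(q, p) \<in> D"
proof (rule dual.closed_op_adjoint_adjoint[OF D_op D_closed])
  show "(q, p) \<in> adjoint_op ip0 ip1 (adjoint_op ip1 ip0 D)"
  proof (rule mem_adjoint_opI)
    fix z t assume "(z, t) \<in> adjoint_op ip1 ip0 D"
    then have zt: "(z, - t) \<in> G0" by (simp add: mem_neg_op_iff)
    then have "opap G z = - t" using G0_subset opap_eq[OF G_op] by blast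
    then have "ip0 p z = ip1 q t" using assms[of z] zt by (auto simp: h1.ip_minus_right)
    then show "ip1 t q = ip0 z p" using h0.ip_conj_sym[of p z] h1.ip_conj_sym[of q t] by simp
  qed
qed

theorem weak_form_iff:
  assumes w: "w \<in> BD_G"
  shows "(\<forall>v\<in>Domain G. ip1 q (opap G v) + ip0 p v = gip ip0 ip1 G w (proj_G v))
    \<longleftrightarrow> (q, p) \<in> D \<and> proj_D q = opap G w"
proof
  assume weak: "\<forall>v\<in>Domain G. ip1 q (opap G v) + ip0 p v = gip ip0 ip1 G w (proj_G v)"
  have qp: "(q, p) \<in> D"
  proof (rule weak_equation)
    fix v assume v: "v \<in> Domain G0"
    then have "v \<in> Domain G" using G0_subset by blast
    then show "ip1 q (opap G v) + ip0 p v = 0"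
      using weak proj_G_of_G0[OF v] graph_G.ip_zero_right[OF BD_Domain[OF w]] by simp
  qed
  then have qD: "q \<in> Domain D" and Dq: "opap D q = p" using dual.opap_eq[OF D_op] by auto
  define z where "z = opap D (proj_D q)"
  have z: "z \<in> BD_G" using D_maps_BD proj_D_decomposition[OF qD] unfolding z_def by blast
  have zw: "z - w \<in> BD_G" by (rule BD_diff[OF G_op G0_subset z w])
  have "gip ip0 ip1 G z (proj_G v) = gip ip0 ip1 G w (proj_G v)" if "v \<in> Domain G" for v
    using weak green_formula[OF qD that] Dq that unfolding z_def by simp
  then have "gip ip0 ip1 G z (z - w) = gip ip0 ip1 G w (z - w)"
    using BD_Domain[OF zw] proj_G_of_BD[OF zw] by metis
  then have "gip ip0 ip1 G (z - w) (z - w) = 0"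
    using graph_G.ip_diff_left[OF BD_Domain[OF z] BD_Domain[OF w] BD_Domain[OF zw]] by simp
  then have "z = w" using graph_G.ip_self_eq_zero_iff[OF BD_Domain[OF zw]] by simp
  moreover have "opap G z = proj_D q"
    unfolding z_def using opap_eq[OF G_op BD_D_graph_G] proj_D_decomposition[OF qD] by blast
  ultimately show "(q, p) \<in> D \<and> proj_D q = opap G w" using qp by simp
next
  assume "(q, p) \<in> D \<and> proj_D q = opap G w"
  then have qD: "q \<in> Domain D" and Dq: "opap D q = p" and pq: "proj_D q = opap G w"
    using dual.opap_eq[OF D_op] by auto
  have "opap D (proj_D q) = w" using pq dual.opap_eq[OF D_op BD_G_graph_D[OF w]] by simp
  then show "\<forall>v\<in>Domain G. ip1 q (opap G v) + ip0 p v = gip ip0 ip1 G w (proj_G v)"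
    using green_formula[OF qD] Dq by simp
qed

lemma mem_DtN_H_iff:
  "(\<phi>, \<psi>) \<in> DtN_H ip0 ip1 G D m a ipH \<kappa> \<longleftrightarrow>
    (\<exists>u\<in>Domain G. \<kappa> (proj_G u) = \<phi> \<and> (a (opap G u), m u) \<in> D \<and>
       proj_D (a (opap G u)) = opap G (kappa_adj ip0 ip1 G G0 ipH \<kappa> \<psi>))"
proof -
  define y where "y = opap G (kappa_adj ip0 ip1 G G0 ipH \<kappa> \<psi>)"
  have eqn: "x \<in> Domain D \<and> m u - opap D x = 0 \<longleftrightarrow> (x, m u) \<in> D" for x u
  proof
    assume "x \<in> Domain D \<and> m u - opap D x = 0"
    then show "(x, m u) \<in> D" using dual.opap_mem[OF D_op, of x] by simp
  next
    assume xm: "(x, m u) \<in> D"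
    then show "x \<in> Domain D \<and> m u - opap D x = 0" using dual.opap_eq[OF D_op xm] by force
  qed
  have DtN: "(u0, y) \<in> DtN ip0 ip1 G D m a \<longleftrightarrow>
      (\<exists>u\<in>Domain G. u0 = proj_G u \<and> (a (opap G u), m u) \<in> D \<and> proj_D (a (opap G u)) = y)" for u0
    unfolding DtN_def mem_Collect_eq prod.inject eqn by blast
  have "(\<phi>, \<psi>) \<in> DtN_H ip0 ip1 G D m a ipH \<kappa> \<longleftrightarrow> (\<exists>u0\<in>BD_G. \<kappa> u0 = \<phi> \<and> (u0, y) \<in> DtN ip0 ip1 G D m a)"
    unfolding DtN_H_def y_def by simp
  also have "\<dots> \<longleftrightarrow> (\<exists>u\<in>Domain G. \<kappa> (proj_G u) = \<phi> \<and> (a (opap G u), m u) \<in> D \<and> proj_D (a (opap G u)) = y)"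
    unfolding DtN using proj_G_decomposition by blast
  finally show ?thesis unfolding y_def .
qed

theorem DtN_H_eq_weak_form:
  fixes scH :: "complex \<Rightarrow> 'c::ab_group_add \<Rightarrow> 'c" and ipH and \<kappa> :: "'a \<Rightarrow> 'c"
  assumes HH: "cHilbert scH ipH"
    and \<kappa>_add: "\<forall>u\<in>BD_G. \<forall>v\<in>BD_G. \<kappa> (u + v) = \<kappa> u + \<kappa> v"
    and \<kappa>_scale: "\<forall>c. \<forall>u\<in>BD_G. \<kappa> (sc0 c u) = scH c (\<kappa> u)"
    and \<kappa>_bd: "\<exists>C. \<forall>u\<in>BD_G. inorm ipH (\<kappa> u) \<le> C * sqrt (Re (gip ip0 ip1 G u u))"
  shows "DtN_H ip0 ip1 G D m a ipH \<kappa> =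
    {(\<phi>, \<psi>). \<exists>u\<in>Domain G. \<kappa> (proj_G u) = \<phi> \<and>
        (\<forall>v\<in>Domain G. ip1 (a (opap G u)) (opap G v) + ip0 (m u) v = ipH \<psi> (\<kappa> (proj_G v)))}"
proof -
  interpret H: inner_space_on scH UNIV ipH by (rule cHilbert_inner_space[OF HH])
  define w where "w \<psi> = kappa_adj ip0 ip1 G G0 ipH \<kappa> \<psi>" for \<psi>
  have w: "w \<psi> \<in> BD_G" and rep: "\<forall>u\<in>BD_G. ipH (\<kappa> u) \<psi> = gip ip0 ip1 G u (w \<psi>)" for \<psi>
    using kappa_adj_characterization[OF G_op G0_subset G_closed HH \<kappa>_add \<kappa>_scale \<kappa>_bd]
    unfolding w_def by auto
  have functional: "ipH \<psi> (\<kappa> (proj_G v)) = gip ip0 ip1 G (w \<psi>) (proj_G v)" if "v \<in> Domain G" for \<psi> v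
  proof -
    have v: "proj_G v \<in> BD_G" using proj_G_decomposition[OF that] by blast
    have "ipH \<psi> (\<kappa> (proj_G v)) = cnj (ipH (\<kappa> (proj_G v)) \<psi>)"
      using H.ip_conj_sym[of "\<kappa> (proj_G v)" \<psi>] by simp
    also have "\<dots> = cnj (gip ip0 ip1 G (proj_G v) (w \<psi>))" using rep v by simp
    also have "\<dots> = gip ip0 ip1 G (w \<psi>) (proj_G v)"
      using graph_G.ip_conj_sym[OF BD_Domain[OF v] BD_Domain[OF w]] by simp
    finally show ?thesis .
  qed
  have "(\<phi>, \<psi>) \<in> DtN_H ip0 ip1 G D m a ipH \<kappa> \<longleftrightarrow> (\<exists>u\<in>Domain G. \<kappa> (proj_G u) = \<phi> \<and>
      (\<forall>v\<in>Domain G. ip1 (a (opap G u)) (opap G v) + ip0 (m u) v = ipH \<psi> (\<kappa> (proj_G v))))" for \<phi> \<psi>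
  proof -
    have "(\<phi>, \<psi>) \<in> DtN_H ip0 ip1 G D m a ipH \<kappa> \<longleftrightarrow> (\<exists>u\<in>Domain G. \<kappa> (proj_G u) = \<phi> \<and>
        (a (opap G u), m u) \<in> D \<and> proj_D (a (opap G u)) = opap G (w \<psi>))"
      by (simp only: mem_DtN_H_iff w_def)
    also have "\<dots> \<longleftrightarrow> (\<exists>u\<in>Domain G. \<kappa> (proj_G u) = \<phi> \<and>
        (\<forall>v\<in>Domain G. ip1 (a (opap G u)) (opap G v) + ip0 (m u) v = gip ip0 ip1 G (w \<psi>) (proj_G v)))"
      using weak_form_iff[OF w] by blast
    also have "\<dots> \<longleftrightarrow> (\<exists>u\<in>Domain G. \<kappa> (proj_G u) = \<phi> \<and>
        (\<forall>v\<in>Domain G. ip1 (a (opap G u)) (opap G v) + ip0 (m u) v = ipH \<psi> (\<kappa> (proj_G v))))"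
      using functional by auto
    finally show ?thesis .
  qed
  then show ?thesis by (auto simp: set_eq_iff)
qed

end

theorem proposition5p10:
  fixes sc0 :: "complex \<Rightarrow> 'a::ab_group_add \<Rightarrow> 'a" and ip0 :: "'a \<Rightarrow> 'a \<Rightarrow> complex"
    and sc1 :: "complex \<Rightarrow> 'b::ab_group_add \<Rightarrow> 'b" and ip1 :: "'b \<Rightarrow> 'b \<Rightarrow> complex"
    and scH :: "complex \<Rightarrow> 'c::ab_group_add \<Rightarrow> 'c" and ipH :: "'c \<Rightarrow> 'c \<Rightarrow> complex"
    and G :: "('a \<times> 'b) set" and D :: "('b \<times> 'a) set"
    and m :: "'a \<Rightarrow> 'a" and a :: "'b \<Rightarrow> 'b" and \<kappa> :: "'a \<Rightarrow> 'c"
  assumes H0: "cHilbert sc0 ip0" and H1: "cHilbert sc1 ip1" and HH: "cHilbert scH ipH"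
    and G_op: "lin_op sc0 sc1 G" and G_dense: "dense_in ip0 (Domain G)"
    and G_closed: "closed_op ip0 ip1 G"
    and D_op: "lin_op sc1 sc0 D" and D_dense: "dense_in ip1 (Domain D)"
    and D_closed: "closed_op ip1 ip0 D"
    and GD: "neg_op (adjoint_op ip0 ip1 G) \<subseteq> D"
    and m_bd: "bounded_lin sc0 ip0 sc0 ip0 m"
    and a_bd: "bounded_lin sc1 ip1 sc1 ip1 a" and a_coer: "coercive ip1 a"
    and \<kappa>_add: "\<forall>u\<in>BD ip0 ip1 G (neg_op (adjoint_op ip1 ip0 D)).
         \<forall>v\<in>BD ip0 ip1 G (neg_op (adjoint_op ip1 ip0 D)). \<kappa> (u + v) = \<kappa> u + \<kappa> v"
    and \<kappa>_scale: "\<forall>c. \<forall>u\<in>BD ip0 ip1 G (neg_op (adjoint_op ip1 ip0 D)). \<kappa> (sc0 c u) = scH c (\<kappa> u)"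
    and \<kappa>_bd: "\<exists>C. \<forall>u\<in>BD ip0 ip1 G (neg_op (adjoint_op ip1 ip0 D)).
         inorm ipH (\<kappa> u) \<le> C * sqrt (Re (gip ip0 ip1 G u u))"
    and \<kappa>_inj: "inj_on \<kappa> (BD ip0 ip1 G (neg_op (adjoint_op ip1 ip0 D)))"
    and \<kappa>_dense: "dense_in ipH (\<kappa> ` BD ip0 ip1 G (neg_op (adjoint_op ip1 ip0 D)))"
  shows "DtN_H ip0 ip1 G D m a ipH \<kappa> =
    {(\<phi>, \<psi>). \<exists>u\<in>Domain G.
        \<kappa> (piBD ip0 ip1 G (neg_op (adjoint_op ip1 ip0 D)) u) = \<phi> \<and>
        (\<forall>v\<in>Domain G. ip1 (a (opap G u)) (opap G v) + ip0 (m u) v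
            = ipH \<psi> (\<kappa> (piBD ip0 ip1 G (neg_op (adjoint_op ip1 ip0 D)) v)))}"
proof -
  have "boundary_pair sc0 ip0 sc1 ip1 G D"
    by (rule boundary_pair.intro[OF hilbert_pair.intro[OF H0 H1]
          boundary_pair_axioms.intro[OF G_op G_closed D_op D_closed GD]])
  then show ?thesis by (rule boundary_pair.DtN_H_eq_weak_form[OF _ HH \<kappa>_add \<kappa>_scale \<kappa>_bd])
qed

end
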